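(* Consider the setting and certainty-equivalent controller described in the context, and let $e_k=x_k-\hat{x}_k$ and $\tilde{e}_k=\check{x}_k-\hat{x}_k$ with $\check{x}_k=\mathbb{E}[x_k\mid\mathcal{I}^e_k]$. Then, for $k\in\mathcal{K}$, with $\delta_k$ the transmission decision at time $k$, $$\mathbb{E}[e_{k+1}\mid\mathcal{I}^e_k]=(1-\delta_k)A\tilde{e}_k,\qquad \mathrm{Cov}[e_{k+1}\mid\mathcal{I}^e_k]=\sum_{t=0}^{\zeta_k}A^tW(A^t)^T.$$
   Context: Let $n,m\ge 1$, $N\in\mathbb{N}$, $\mathcal{K}=\{0,1,\dots,N\}$. A process evolves as $x_{k+1}=Ax_k+Bu_k+w_k$ with output $y_k=x_{k-\tau_k}$, where $A\in\mathbb{R}^{n\times n}$, $B\in\mathbb{R}^{n\times m}$, $w_k$ is Gaussian white noise with zero mean and covariance $W\succ0$, $x_0$ is Gaussian with mean $m_0$ and covariance $M_0$, $\tau_k\in\mathbb{N}_0$ are random delays with known distribution and $\tau_0=0$, all mutually independent. An event trigger chooses $\delta_k\in\{0,1\}$ (transmission to the controller, received at time $k+1$). Ages of information: at the event trigger $\zeta_0=0$, $\zeta_k=\tau_k$ if $\tau_k<\zeta_{k-1}+1$ and $\zeta_k=\zeta_{k-1}+1$ otherwise; at the controller $\eta_0=\infty$, $\eta_k=\zeta_{k-1}+1$ if $\delta_{k-1}=1$ and $\eta_k=\eta_{k-1}+1$ otherwise. The event trigger's information set is $\mathcal{I}^e_k=\{x_{t-\zeta_t},x_{t-\eta_t},\delta_s,u_s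 : 0\le t\le k,\ 0\le s<k\}$ (infinite-age entries void), and admissible triggering policies are Borel measurable kernels $\mathbb{P}(\delta_k\mid\mathcal{I}^e_k)$. Let $Q\succeq0$, $R\succ0$, $S_{N+1}=Q$, $S_k=Q+A^TS_{k+1}A-A^TS_{k+1}B(B^TS_{k+1}B+R)^{-1}B^TS_{k+1}A$, $L_k=(B^TS_{k+1}B+R)^{-1}B^TS_{k+1}A$. The controller applies $u_k=-L_k\hat{x}_k$, where $\hat{x}_0=m_0$ and $\hat{x}_{k+1}=A^{\zeta_k+1}x_{k-\zeta_k}+\sum_{t=0}^{\zeta_k}A^tBu_{k-t}$ if $\delta_k=1$, and $\hat{x}_{k+1}=A\hat{x}_k+Bu_k$ if $\delta_k=0$. *)

theory Defs
  imports "HOL-Probability.Probability"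
begin

text \<open>Matrix power (note: the ring power on vec types is componentwise, not matrix power).\<close>
fun matpow :: "real^'n^'n \<Rightarrow> nat \<Rightarrow> real^'n^'n" where
  "matpow A 0 = mat 1"
| "matpow A (Suc t) = A ** matpow A t"

definition psd_mat :: "real^'n^'n \<Rightarrow> bool" where
  "psd_mat S \<longleftrightarrow> transpose S = S \<and> (\<forall>v. 0 \<le> v \<bullet> (S *v v))"

definition pd_mat :: "real^'n^'n \<Rightarrow> bool" where
  "pd_mat S \<longleftrightarrow> transpose S = S \<and> (\<forall>v. v \<noteq> 0 \<longrightarrow> 0 < v \<bullet> (S *v v))"

text \<open>Riccati recursion: ric j = S_{N+1-j}, i.e. S_{N+1} = Q and
  S_k = Q + A^T S_{k+1} A - A^T S_{k+1} B (B^T S_{k+1} B + R)^{-1} B^T S_{k+1} A.\<close>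
fun ric :: "real^'n^'n \<Rightarrow> real^'m^'n \<Rightarrow> real^'n^'n \<Rightarrow> real^'m^'m \<Rightarrow> nat \<Rightarrow> real^'n^'n" where
  "ric A B Q R 0 = Q"
| "ric A B Q R (Suc j) =
     (let P = ric A B Q R j in
       Q + transpose A ** P ** A
         - transpose A ** P ** B ** matrix_inv (transpose B ** P ** B + R) ** transpose B ** P ** A)"

definition riccati_S :: "real^'n^'n \<Rightarrow> real^'m^'n \<Rightarrow> real^'n^'n \<Rightarrow> real^'m^'m \<Rightarrow> nat \<Rightarrow> nat \<Rightarrow> real^'n^'n" where
  "riccati_S A B Q R N k = ric A B Q R (N + 1 - k)"

definition gain_L :: "real^'n^'n \<Rightarrow> real^'m^'n \<Rightarrow> real^'n^'n \<Rightarrow> real^'m^'m \<Rightarrow> nat \<Rightarrow> nat \<Rightarrow> real^'n^'m" where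
  "gain_L A B Q R N k =
     (let S = riccati_S A B Q R N (Suc k) in
       matrix_inv (transpose B ** S ** B + R) ** transpose B ** S ** A)"

text \<open>Age of information at the event trigger (zeta), from the delays tau.\<close>
fun zeta :: "(nat \<Rightarrow> 'a \<Rightarrow> nat) \<Rightarrow> nat \<Rightarrow> 'a \<Rightarrow> nat" where
  "zeta \<tau> 0 \<omega> = 0"
| "zeta \<tau> (Suc k) \<omega> =
     (if \<tau> (Suc k) \<omega> < zeta \<tau> k \<omega> + 1 then \<tau> (Suc k) \<omega> else zeta \<tau> k \<omega> + 1)"

text \<open>Age of information at the controller (eta), infinite at time 0.\<close>
fun eta :: "(nat \<Rightarrow> 'a \<Rightarrow> bool) \<Rightarrow> (nat \<Rightarrow> 'a \<Rightarrow> nat) \<Rightarrow> nat \<Rightarrow> 'a \<Rightarrow> enat" where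
  "eta \<delta> \<tau> 0 \<omega> = \<infinity>"
| "eta \<delta> \<tau> (Suc k) \<omega> =
     (if \<delta> k \<omega> then enat (zeta \<tau> k \<omega> + 1) else eta \<delta> \<tau> k \<omega> + 1)"

definition rv_sets :: "'a measure \<Rightarrow> 'b measure \<Rightarrow> ('a \<Rightarrow> 'b) \<Rightarrow> 'a set set" where
  "rv_sets M N X = {X -` A \<inter> space M | A. A \<in> sets N}"

text \<open>Generators of the sigma-algebra of the event-trigger information set I^e_k:
  the received measurements x_{t - zeta_t} (with their ages), the controller-side
  measurements x_{t - eta_t} (with their ages; void if eta_t is infinite), and the
  past decisions delta_s and inputs u_s, s < k.\<close>
definition info_sets ::
  "'a measure \<Rightarrow> (nat \<Rightarrow> 'a \<Rightarrow> real^'n) \<Rightarrow> (nat \<Rightarrow> 'a \<Rightarrow> real^'m)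
   \<Rightarrow> (nat \<Rightarrow> 'a \<Rightarrow> bool) \<Rightarrow> (nat \<Rightarrow> 'a \<Rightarrow> nat) \<Rightarrow> nat \<Rightarrow> 'a set set" where
  "info_sets M x u \<delta> \<tau> k =
     (\<Union>t\<in>{..k}.
        rv_sets M (count_space UNIV) (zeta \<tau> t)
      \<union> rv_sets M borel (\<lambda>\<omega>. x (t - zeta \<tau> t \<omega>) \<omega>)
      \<union> rv_sets M (count_space UNIV) (eta \<delta> \<tau> t)
      \<union> rv_sets M borel (\<lambda>\<omega>. case eta \<delta> \<tau> t \<omega> of enat j \<Rightarrow> x (t - j) \<omega> | \<infinity> \<Rightarrow> 0))
   \<union> (\<Union>s\<in>{..<k}. rv_sets M (count_space UNIV) (\<delta> s) \<union> rv_sets M borel (u s))"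

definition info_alg ::
  "'a measure \<Rightarrow> (nat \<Rightarrow> 'a \<Rightarrow> real^'n) \<Rightarrow> (nat \<Rightarrow> 'a \<Rightarrow> real^'m)
   \<Rightarrow> (nat \<Rightarrow> 'a \<Rightarrow> bool) \<Rightarrow> (nat \<Rightarrow> 'a \<Rightarrow> nat) \<Rightarrow> nat \<Rightarrow> 'a measure" where
  "info_alg M x u \<delta> \<tau> k = sigma (space M) (info_sets M x u \<delta> \<tau> k)"

definition cond_exp_vec :: "'a measure \<Rightarrow> 'a measure \<Rightarrow> ('a \<Rightarrow> real^'n) \<Rightarrow> 'a \<Rightarrow> real^'n" where
  "cond_exp_vec M F X \<omega> = (\<chi> i. real_cond_exp M F (\<lambda>\<omega>'. X \<omega>' $ i) \<omega>)"

definition cond_cov :: "'a measure \<Rightarrow> 'a measure \<Rightarrow> ('a \<Rightarrow> real^'n) \<Rightarrow> 'a \<Rightarrow> real^'n^'n" where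
  "cond_cov M F X \<omega> =
     (\<chi> i j. real_cond_exp M F
        (\<lambda>\<omega>'. (X \<omega>' $ i - cond_exp_vec M F X \<omega>' $ i) * (X \<omega>' $ j - cond_exp_vec M F X \<omega>' $ j)) \<omega>)"

text \<open>Gaussian random vector with mean m and covariance S (Cramer--Wold definition:
  every linear functional is (possibly degenerate) normal).\<close>
definition gaussian_vec :: "'a measure \<Rightarrow> ('a \<Rightarrow> real^'n) \<Rightarrow> real^'n \<Rightarrow> real^'n^'n \<Rightarrow> bool" where
  "gaussian_vec M X m S \<longleftrightarrow> psd_mat S \<and> X \<in> borel_measurable M \<and>
     (\<forall>v. let \<mu> = v \<bullet> m; s2 = v \<bullet> (S *v v) in
        (if s2 = 0 then distr M borel (\<lambda>\<omega>. v \<bullet> X \<omega>) = return borel \<mu>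
         else distributed M lborel (\<lambda>\<omega>. v \<bullet> X \<omega>) (normal_density \<mu> (sqrt s2))))"

text \<open>Primitive random variables: initial state, process noise, delays, and the
  randomisation variables realising the (randomised) triggering kernel.\<close>
datatype prim_idx = PX0 | PW nat | PTau nat | PNu nat

definition prim_sets ::
  "'a measure \<Rightarrow> ('a \<Rightarrow> real^'n) \<Rightarrow> (nat \<Rightarrow> 'a \<Rightarrow> real^'n) \<Rightarrow> (nat \<Rightarrow> 'a \<Rightarrow> nat)
   \<Rightarrow> (nat \<Rightarrow> 'a \<Rightarrow> real) \<Rightarrow> prim_idx \<Rightarrow> 'a set set" where
  "prim_sets M x0 w \<tau> \<nu> i = (case i of
       PX0 \<Rightarrow> rv_sets M borel x0
     | PW k \<Rightarrow> rv_sets M borel (w k)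
     | PTau k \<Rightarrow> rv_sets M (count_space UNIV) (\<tau> k)
     | PNu k \<Rightarrow> rv_sets M borel (\<nu> k))"

end

theory Submission
  imports Defs
begin

text \<open>
  Unrolling the dynamics over the last zeta_k steps gives
  x_k = xcheck_k + sum_{t < zeta_k} A^t w_{k-1-t}, where xcheck_k is computed from the received
  measurement x_{k - zeta_k} and past inputs and is therefore I^e_k-measurable; likewise
  e_{k+1} = m_k + sum_{t <= zeta_k} A^t w_{k-t} with m_k = 0 after a transmission and
  m_k = A (xcheck_k - xhat_k) otherwise. On the event zeta_k = c all information of the trigger
  at time k, including delta_k, is a function of x_0, the delays, the randomisation variables
  and the noises w_a with a < k - c, since no measurement it holds is more recent than
  x_{k-c}. The noises w_{k-c}, ..., w_k are independent of it, so conditionally the noise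
  sums have mean zero and covariance sum_{t <= c} A^t W (A^t)^T. Hence
  xcheck_k = E[x_k | I^e_k], and both claims follow.
\<close>

lemma measurable_compose_countable_on:
  fixes g :: "'a \<Rightarrow> 'i::countable"
  assumes g: "g \<in> R \<rightarrow>\<^sub>M count_space UNIV" and range: "\<And>\<omega>. \<omega> \<in> space R \<Longrightarrow> g \<omega> \<in> I"
    and f: "\<And>i. i \<in> I \<Longrightarrow> f i \<in> R \<rightarrow>\<^sub>M N"
  shows "(\<lambda>\<omega>. f (g \<omega>) \<omega>) \<in> R \<rightarrow>\<^sub>M N"
proof (rule measurable_compose_countable'[OF f])
  show "g \<in> R \<rightarrow>\<^sub>M count_space I"
    using range measurable_sets[OF g] by (auto simp: measurable_count_space_eq2_countable)
qed (auto intro: countableI_type)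

lemma measurable_If_count_space:
  assumes "P \<in> R \<rightarrow>\<^sub>M count_space UNIV" "f \<in> R \<rightarrow>\<^sub>M N" "g \<in> R \<rightarrow>\<^sub>M N"
  shows "(\<lambda>\<omega>. if P \<omega> then f \<omega> else g \<omega>) \<in> R \<rightarrow>\<^sub>M N"
proof (rule measurable_If[OF assms(2,3)])
  show "{\<omega> \<in> space R. P \<omega>} \<in> sets R"
    using measurable_sets[OF assms(1), of "{True}"] by (simp add: vimage_def Int_def conj_commute)
qed

lemma integrable_compose_countable_on:
  fixes g :: "'a \<Rightarrow> 'i::countable" and f :: "'i \<Rightarrow> 'a \<Rightarrow> 'b::{banach, second_countable_topology}"
  assumes g: "g \<in> R \<rightarrow>\<^sub>M count_space UNIV" and range: "\<And>\<omega>. \<omega> \<in> space R \<Longrightarrow> g \<omega> \<in> I"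
    and "finite I" and f: "\<And>i. i \<in> I \<Longrightarrow> integrable R (f i)"
  shows "integrable R (\<lambda>\<omega>. f (g \<omega>) \<omega>)"
proof -
  have level_sets: "g -` {i} \<inter> space R \<in> sets R" for i
    using measurable_sets[OF g] by simp
  have "integrable R (\<lambda>\<omega>. \<Sum>i\<in>I. indicator (g -` {i} \<inter> space R) \<omega> *\<^sub>R f i \<omega>)"
    by (intro Bochner_Integration.integrable_sum integrable_mult_indicator level_sets f)
  moreover have "(\<Sum>i\<in>I. indicator (g -` {i} \<inter> space R) \<omega> *\<^sub>R f i \<omega>) = f (g \<omega>) \<omega>"
    if "\<omega> \<in> space R" for \<omega>
  proof -
    have "(\<Sum>i\<in>I. indicator (g -` {i} \<inter> space R) \<omega> *\<^sub>R f i \<omega>) = (\<Sum>i\<in>I. if i = g \<omega> then f i \<omega> else 0)"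
      by (rule sum.cong) (use that in \<open>auto simp: indicator_def\<close>)
    then show ?thesis using range[OF that] \<open>finite I\<close> by (simp add: sum.delta)
  qed
  ultimately show ?thesis by (simp cong: Bochner_Integration.integrable_cong)
qed

lemma measurable_sigma_rv_sets:
  assumes "E \<subseteq> Pow \<Omega>" "rv_sets M N Y \<subseteq> E" "space M = \<Omega>" "space N = UNIV"
  shows "Y \<in> sigma \<Omega> E \<rightarrow>\<^sub>M N"
proof (rule measurableI)
  fix A assume "A \<in> sets N"
  then have "Y -` A \<inter> \<Omega> \<in> E" using assms unfolding rv_sets_def by auto
  then show "Y -` A \<inter> space (sigma \<Omega> E) \<in> sets (sigma \<Omega> E)"
    using assms(1) by (simp add: sigma_sets.Basic)
qed (use assms in simp)

lemma measurable_ident_sigma: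
  assumes "E \<subseteq> Pow \<Omega>" "space R \<subseteq> \<Omega>" "\<And>G. G \<in> E \<Longrightarrow> G \<inter> space R \<in> sets R"
  shows "(\<lambda>\<omega>. \<omega>) \<in> R \<rightarrow>\<^sub>M sigma \<Omega> E"
  using assms by (intro measurable_measure_of) (auto simp: Int_commute)

lemma rv_sets_Int_space:
  assumes "Y \<in> R \<rightarrow>\<^sub>M N" "space R \<subseteq> space M" "G \<in> rv_sets M N Y"
  shows "G \<inter> space R \<in> sets R"
proof -
  obtain A where A: "A \<in> sets N" "G = Y -` A \<inter> space M" using assms(3) unfolding rv_sets_def by auto
  then have "G \<inter> space R = Y -` A \<inter> space R" using assms(2) by auto
  then show ?thesis using measurable_sets[OF assms(1) A(1)] by simp
qed

lemma rv_sets_subset_Pow: "rv_sets M N Y \<subseteq> Pow (space M)"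
  unfolding rv_sets_def by auto

lemma rv_sets_subset_sets: "Y \<in> M \<rightarrow>\<^sub>M N \<Longrightarrow> rv_sets M N Y \<subseteq> sets M"
  unfolding rv_sets_def by (auto intro: measurable_sets)

lemma rv_sets_subset_sigma_sets:
  assumes "Y \<in> sigma (space M) G \<rightarrow>\<^sub>M N" "G \<subseteq> Pow (space M)"
  shows "rv_sets M N Y \<subseteq> sigma_sets (space M) G"
  unfolding rv_sets_def using measurable_sets[OF assms(1)] assms(2) by auto

lemma Int_stable_rv_sets: "Int_stable (rv_sets M N Y)"
  unfolding Int_stable_def rv_sets_def
proof safe
  fix A B assume "A \<in> sets N" "B \<in> sets N"
  then show "\<exists>C. (Y -` A \<inter> space M) \<inter> (Y -` B \<inter> space M) = Y -` C \<inter> space M \<and> C \<in> sets N"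
    by (intro exI[of _ "A \<inter> B"]) auto
qed

lemma info_sets_subset_Pow: "info_sets M x u \<delta> \<tau> k \<subseteq> Pow (space M)"
  unfolding info_sets_def rv_sets_def by auto

lemma borel_measurable_vec_nth: "f \<in> borel_measurable R \<Longrightarrow> (\<lambda>\<omega>. (f \<omega> :: real^'n) $ i) \<in> borel_measurable R"
  by (erule measurable_compose) measurable

lemma borel_measurable_matrix_vector_mult:
  fixes C :: "real^'p^'q"
  shows "f \<in> borel_measurable R \<Longrightarrow> (\<lambda>\<omega>. C *v f \<omega>) \<in> borel_measurable R"
  by (rule borel_measurable_continuous_on[OF linear_continuous_on[OF matrix_vector_mul_bounded_linear]])

lemma integrable_vec_nth: "integrable R f \<Longrightarrow> integrable R (\<lambda>\<omega>. (f \<omega> :: real^'n) $ i)"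
  by (rule integrable_bounded_linear[OF bounded_linear_vec_nth])

lemma integrable_matrix_vector_mult:
  fixes C :: "real^'p^'q"
  shows "integrable R f \<Longrightarrow> integrable R (\<lambda>\<omega>. C *v f \<omega>)"
  by (rule integrable_bounded_linear[OF matrix_vector_mul_bounded_linear])

lemma integrable_vec_lambda:
  fixes f :: "'a \<Rightarrow> real^'n"
  assumes "\<And>i. integrable R (\<lambda>\<omega>. f \<omega> $ i)"
  shows "integrable R f"
proof -
  have "integrable R (\<lambda>\<omega>. \<Sum>i\<in>UNIV. (f \<omega> $ i) *\<^sub>R axis i (1::real))"
    by (intro Bochner_Integration.integrable_sum integrable_scaleR_left assms)
  moreover have "f = (\<lambda>\<omega>. \<Sum>i\<in>UNIV. (f \<omega> $ i) *\<^sub>R axis i (1::real))"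
    by (auto simp: vec_eq_iff axis_def if_distrib cong: if_cong)
  ultimately show ?thesis by simp
qed

lemma integral_indicator_mult_cong:
  fixes f g :: "'a \<Rightarrow> real"
  shows "(\<And>\<omega>. \<omega> \<in> S \<Longrightarrow> f \<omega> = g \<omega>) \<Longrightarrow> (\<integral>\<omega>. indicator S \<omega> * f \<omega> \<partial>R) = (\<integral>\<omega>. indicator S \<omega> * g \<omega> \<partial>R)"
  by (intro Bochner_Integration.integral_cong) (auto simp: indicator_def)

lemma integrable_indicator_mult:
  "S \<in> sets R \<Longrightarrow> integrable R f \<Longrightarrow> integrable R (\<lambda>\<omega>. indicator S \<omega> * (f \<omega> :: real))"
  using integrable_mult_indicator[of S R f] by simp

lemma matpow_commute: "A ** matpow A n = matpow A n ** A"
  by (induction n) (auto simp: matrix_mul_assoc)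

lemma matpow_mult_vector_Suc: "matpow A n *v (A *v y) = matpow A (Suc n) *v y"
  by (simp add: matrix_vector_mul_assoc matpow_commute)

lemma matrix_mul_transpose_nth:
  fixes P W :: "real^'n^'n"
  shows "(P ** W ** transpose P) $ i $ j = (\<Sum>l\<in>UNIV. \<Sum>l'\<in>UNIV. P $ i $ l * P $ j $ l' * W $ l $ l')"
proof -
  have "(P ** W ** transpose P) $ i $ j = (\<Sum>l'\<in>UNIV. \<Sum>l\<in>UNIV. P $ i $ l * P $ j $ l' * W $ l $ l')"
    by (simp add: matrix_matrix_mult_def transpose_def sum_distrib_left sum_distrib_right mult_ac)
  also have "\<dots> = (\<Sum>l\<in>UNIV. \<Sum>l'\<in>UNIV. P $ i $ l * P $ j $ l' * W $ l $ l')"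
    by (rule sum.swap)
  finally show ?thesis .
qed

lemma axis_inner_matrix_vector_mult: "axis l (1::real) \<bullet> ((W::real^'n^'n) *v axis l' 1) = W $ l $ l'"
  by (simp add: inner_axis' matrix_vector_mult_basis column_def)

lemma symmetric_nth: "transpose W = W \<Longrightarrow> W $ l' $ l = W $ l $ l'"
  by (simp add: transpose_def vec_eq_iff)

section \<open>Second moments of Gaussian vectors\<close>

lemma integral_normal_square:
  fixes \<mu> \<sigma> :: real assumes s: "0 < \<sigma>"
  shows "integrable lborel (\<lambda>x. normal_density \<mu> \<sigma> x * x\<^sup>2)"
    and "(\<integral>x. normal_density \<mu> \<sigma> x * x\<^sup>2 \<partial>lborel) = \<sigma>\<^sup>2 + \<mu>\<^sup>2"
proof -
  have i1: "integrable lborel (\<lambda>x. normal_density \<mu> \<sigma> x * (x - \<mu>)\<^sup>2)"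
    using integrable_normal_moment[OF s, of \<mu> 2] by simp
  have i2: "integrable lborel (\<lambda>x. normal_density \<mu> \<sigma> x * x)"
    using integrable_normal_moment_nz_1[OF s] .
  have i3: "integrable lborel (\<lambda>x. normal_density \<mu> \<sigma> x)"
    using integrable_normal_density s by blast
  have v1: "(\<integral>x. normal_density \<mu> \<sigma> x * (x - \<mu>)\<^sup>2 \<partial>lborel) = \<sigma>\<^sup>2"
    using integral_normal_moment_even[OF s, of \<mu> 1] s by (simp add: fact_numeral)
  have v2: "(\<integral>x. normal_density \<mu> \<sigma> x * x \<partial>lborel) = \<mu>"
    using integral_normal_moment_nz_1[OF s] .
  have v3: "(\<integral>x. normal_density \<mu> \<sigma> x \<partial>lborel) = 1"
    using integral_normal_density s by blast
  have square: "(\<lambda>x. normal_density \<mu> \<sigma> x * x\<^sup>2) =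
     (\<lambda>x. normal_density \<mu> \<sigma> x * (x - \<mu>)\<^sup>2 + 2 * \<mu> * (normal_density \<mu> \<sigma> x * x) - \<mu>\<^sup>2 * normal_density \<mu> \<sigma> x)"
    by (auto simp: power2_eq_square algebra_simps)
  show "integrable lborel (\<lambda>x. normal_density \<mu> \<sigma> x * x\<^sup>2)"
    unfolding square by (intro Bochner_Integration.integrable_diff Bochner_Integration.integrable_add integrable_mult_right i1 i2 i3)
  show "(\<integral>x. normal_density \<mu> \<sigma> x * x\<^sup>2 \<partial>lborel) = \<sigma>\<^sup>2 + \<mu>\<^sup>2"
    unfolding square using i1 i2 i3 v1 v2 v3 by (simp add: power2_eq_square)
qed

lemma integral_distr_return:
  fixes f :: "real \<Rightarrow> real"
  assumes D: "distr M borel Y = return borel \<mu>"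
    and [measurable]: "Y \<in> borel_measurable M" "f \<in> borel_measurable borel"
  shows "integrable M (\<lambda>\<omega>. f (Y \<omega>))" and "(\<integral>\<omega>. f (Y \<omega>) \<partial>M) = f \<mu>"
proof -
  have "integrable (distr M borel Y) f"
    by (simp add: D integrable_iff_bounded nn_integral_return)
  then show "integrable M (\<lambda>\<omega>. f (Y \<omega>))" by (subst (asm) integrable_distr_eq) auto
  have "(\<integral>\<omega>. f (Y \<omega>) \<partial>M) = integral\<^sup>L (distr M borel Y) f"
    by (subst integral_distr) auto
  then show "(\<integral>\<omega>. f (Y \<omega>) \<partial>M) = f \<mu>" by (simp add: D integral_return)
qed

lemma (in prob_space) gaussian_vec_inner_moments:
  assumes g: "gaussian_vec M X m S"
  shows "integrable M (\<lambda>\<omega>. v \<bullet> X \<omega>)" "integrable M (\<lambda>\<omega>. (v \<bullet> X \<omega>)\<^sup>2)"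
    "expectation (\<lambda>\<omega>. v \<bullet> X \<omega>) = v \<bullet> m" "expectation (\<lambda>\<omega>. (v \<bullet> X \<omega>)\<^sup>2) = (v \<bullet> m)\<^sup>2 + v \<bullet> (S *v v)"
proof -
  define \<mu> where "\<mu> = v \<bullet> m"
  define s2 where "s2 = v \<bullet> (S *v v)"
  have "X \<in> borel_measurable M" using g unfolding gaussian_vec_def by auto
  then have Y: "(\<lambda>\<omega>. v \<bullet> X \<omega>) \<in> borel_measurable M" by measurable
  have s2_nonneg: "0 \<le> s2" using g unfolding gaussian_vec_def psd_mat_def s2_def by auto
  have distr: "if s2 = 0 then distr M borel (\<lambda>\<omega>. v \<bullet> X \<omega>) = return borel \<mu>
         else distributed M lborel (\<lambda>\<omega>. v \<bullet> X \<omega>) (normal_density \<mu> (sqrt s2))"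
    using g unfolding gaussian_vec_def \<mu>_def s2_def Let_def by auto
  have "integrable M (\<lambda>\<omega>. v \<bullet> X \<omega>) \<and> integrable M (\<lambda>\<omega>. (v \<bullet> X \<omega>)\<^sup>2)
     \<and> expectation (\<lambda>\<omega>. v \<bullet> X \<omega>) = \<mu> \<and> expectation (\<lambda>\<omega>. (v \<bullet> X \<omega>)\<^sup>2) = \<mu>\<^sup>2 + s2"
  proof (cases "s2 = 0")
    case True
    then have D: "distr M borel (\<lambda>\<omega>. v \<bullet> X \<omega>) = return borel \<mu>" using distr by simp
    show ?thesis
      using integral_distr_return[OF D Y, of "\<lambda>y. y"] integral_distr_return[OF D Y, of "\<lambda>y. y\<^sup>2"] True
      by simp
  next
    case False
    then have sd: "0 < sqrt s2" using s2_nonneg by simp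
    have D: "distributed M lborel (\<lambda>\<omega>. v \<bullet> X \<omega>) (normal_density \<mu> (sqrt s2))"
      using distr False by simp
    show ?thesis
      using distributed_integrable[OF D, of "\<lambda>y. y"] integrable_normal_moment_nz_1[OF sd]
        distributed_integrable[OF D, of "\<lambda>y. y\<^sup>2"] integral_normal_square[OF sd, of \<mu>]
        normal_distributed_expectation[OF sd D] distributed_integral[OF D, of "\<lambda>y. y\<^sup>2", symmetric]
        s2_nonneg
      by simp
  qed
  then show "integrable M (\<lambda>\<omega>. v \<bullet> X \<omega>)" "integrable M (\<lambda>\<omega>. (v \<bullet> X \<omega>)\<^sup>2)"
    "expectation (\<lambda>\<omega>. v \<bullet> X \<omega>) = v \<bullet> m" "expectation (\<lambda>\<omega>. (v \<bullet> X \<omega>)\<^sup>2) = (v \<bullet> m)\<^sup>2 + v \<bullet> (S *v v)"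
    by (simp_all add: \<mu>_def s2_def add.commute)
qed

lemma zeta_le: "zeta \<tau> t \<omega> \<le> t"
  by (induction t) auto

lemma diff_zeta_mono: "t \<le> j \<Longrightarrow> t - zeta \<tau> t \<omega> \<le> j - zeta \<tau> j \<omega>"
proof (induction j)
  case (Suc j)
  have "j - zeta \<tau> j \<omega> \<le> Suc j - zeta \<tau> (Suc j) \<omega>" using zeta_le[of \<tau> j \<omega>] by (simp, arith)
  with Suc show ?case by (cases "t = Suc j") auto
qed simp

lemma zeta_le_eta: "enat (zeta \<tau> t \<omega>) \<le> eta \<delta> \<tau> t \<omega>"
proof (induction t)
  case (Suc t)
  have "enat (zeta \<tau> (Suc t) \<omega>) \<le> enat (zeta \<tau> t \<omega>) + 1" by (simp add: one_enat_def)
  also have "\<dots> \<le> eta \<delta> \<tau> t \<omega> + 1" using Suc by (simp add: add_right_mono)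
  finally show ?case by (simp add: one_enat_def)
qed simp

lemma measurable_zeta:
  assumes "\<And>i. \<tau> i \<in> R \<rightarrow>\<^sub>M count_space UNIV"
  shows "zeta \<tau> t \<in> R \<rightarrow>\<^sub>M count_space UNIV"
proof (induction t)
  case (Suc t)
  have "(\<lambda>\<omega>. (\<lambda>z \<omega>. if \<tau> (Suc t) \<omega> < z + 1 then \<tau> (Suc t) \<omega> else z + 1) (zeta \<tau> t \<omega>) \<omega>)
      \<in> R \<rightarrow>\<^sub>M count_space UNIV"
    by (rule measurable_compose_countable[OF measurable_compose[OF assms] Suc]) simp
  then show ?case by simp
qed simp


context sigma_finite_subalgebra
begin

lemma cond_exp_vec_split:
  fixes X Y V :: "'a \<Rightarrow> real^'n"
  assumes split: "\<And>\<omega>. \<omega> \<in> space M \<Longrightarrow> X \<omega> = Y \<omega> + V \<omega>"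
    and orth: "\<And>G i. G \<in> sets F \<Longrightarrow> (\<integral>\<omega>. indicator G \<omega> * V \<omega> $ i \<partial>M) = 0"
    and "integrable M Y" "integrable M V" and Y: "Y \<in> borel_measurable F"
  shows "AE \<omega> in M. cond_exp_vec M F X \<omega> = Y \<omega>"
proof -
  have int: "integrable M (\<lambda>\<omega>. Y \<omega> $ i)" "integrable M (\<lambda>\<omega>. V \<omega> $ i)" for i
    using assms(3,4) by (auto intro: integrable_vec_nth)
  have "AE \<omega> in M. real_cond_exp M F (\<lambda>\<omega>. X \<omega> $ i) \<omega> = Y \<omega> $ i" for i
  proof (rule real_cond_exp_charact)
    fix G assume G: "G \<in> sets F"
    then have "G \<in> sets M" using subalg unfolding subalgebra_def by auto
    then have "(\<integral>\<omega>. indicator G \<omega> * X \<omega> $ i \<partial>M)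
        = (\<integral>\<omega>. indicator G \<omega> * Y \<omega> $ i \<partial>M) + (\<integral>\<omega>. indicator G \<omega> * V \<omega> $ i \<partial>M)"
      using int split
      by (subst Bochner_Integration.integral_add[symmetric])
         (auto intro!: integrable_indicator_mult Bochner_Integration.integral_cong simp: distrib_left)
    then show "(\<integral>\<omega>\<in>G. X \<omega> $ i \<partial>M) = (\<integral>\<omega>\<in>G. Y \<omega> $ i \<partial>M)"
      using orth[OF G] by (simp add: set_lebesgue_integral_def)
  next
    show "integrable M (\<lambda>\<omega>. X \<omega> $ i)"
      using Bochner_Integration.integrable_add[OF int] split by (simp cong: Bochner_Integration.integrable_cong)
  qed (use int Y borel_measurable_vec_nth in auto)
  then have "AE \<omega> in M. \<forall>i. real_cond_exp M F (\<lambda>\<omega>. X \<omega> $ i) \<omega> = Y \<omega> $ i"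
    by (simp add: AE_all_countable)
  then show ?thesis
    by eventually_elim (simp add: cond_exp_vec_def vec_eq_iff)
qed

lemma cond_cov_nth_split:
  fixes X Y V :: "'a \<Rightarrow> real^'n"
  assumes mean: "AE \<omega> in M. cond_exp_vec M F X \<omega> = Y \<omega>"
    and split: "\<And>\<omega>. \<omega> \<in> space M \<Longrightarrow> X \<omega> = Y \<omega> + V \<omega>"
    and X: "X \<in> borel_measurable M" and V: "V \<in> borel_measurable M"
  shows "AE \<omega> in M. cond_cov M F X \<omega> $ i $ j = real_cond_exp M F (\<lambda>\<omega>. V \<omega> $ i * V \<omega> $ j) \<omega>"
  unfolding cond_cov_def vec_lambda_beta
proof (rule real_cond_exp_cong)
  show "AE \<omega> in M. (X \<omega> $ i - cond_exp_vec M F X \<omega> $ i) * (X \<omega> $ j - cond_exp_vec M F X \<omega> $ j)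
      = V \<omega> $ i * V \<omega> $ j"
    using mean AE_space by eventually_elim (simp add: split)
  have "(\<lambda>\<omega>. cond_exp_vec M F X \<omega> $ l) \<in> borel_measurable M" for l
    unfolding cond_exp_vec_def by (simp add: borel_measurable_cond_exp2)
  then show "(\<lambda>\<omega>. (X \<omega> $ i - cond_exp_vec M F X \<omega> $ i) * (X \<omega> $ j - cond_exp_vec M F X \<omega> $ j))
      \<in> borel_measurable M"
    using borel_measurable_vec_nth[OF X] by measurable
  show "(\<lambda>\<omega>. V \<omega> $ i * V \<omega> $ j) \<in> borel_measurable M"
    using borel_measurable_vec_nth[OF V] by measurable
qed

lemma cond_cov_split:
  fixes X Y V :: "'a \<Rightarrow> real^'n" and C :: "'a \<Rightarrow> real^'n^'n"
  assumes mean: "AE \<omega> in M. cond_exp_vec M F X \<omega> = Y \<omega>"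
    and split: "\<And>\<omega>. \<omega> \<in> space M \<Longrightarrow> X \<omega> = Y \<omega> + V \<omega>"
    and second: "\<And>G i j. G \<in> sets F
      \<Longrightarrow> (\<integral>\<omega>. indicator G \<omega> * (V \<omega> $ i * V \<omega> $ j) \<partial>M) = (\<integral>\<omega>. indicator G \<omega> * C \<omega> $ i $ j \<partial>M)"
    and "\<And>i j. integrable M (\<lambda>\<omega>. V \<omega> $ i * V \<omega> $ j)" "\<And>i j. integrable M (\<lambda>\<omega>. C \<omega> $ i $ j)"
    and "\<And>i j. (\<lambda>\<omega>. C \<omega> $ i $ j) \<in> borel_measurable F"
    and X: "X \<in> borel_measurable M" and V: "V \<in> borel_measurable M"
  shows "AE \<omega> in M. cond_cov M F X \<omega> = C \<omega>"
proof -
  have charact: "AE \<omega> in M. real_cond_exp M F (\<lambda>\<omega>. V \<omega> $ i * V \<omega> $ j) \<omega> = C \<omega> $ i $ j" for i j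
    by (rule real_cond_exp_charact) (use assms in \<open>simp_all add: set_lebesgue_integral_def\<close>)
  have "AE \<omega> in M. cond_cov M F X \<omega> $ i $ j = C \<omega> $ i $ j" for i j
    by (rule eventually_elim2[OF cond_cov_nth_split[OF mean split X V, of i j] charact[of i j]]) simp_all
  then have "AE \<omega> in M. \<forall>i j. cond_cov M F X \<omega> $ i $ j = C \<omega> $ i $ j"
    by (simp add: AE_all_countable)
  then show ?thesis
    by eventually_elim (simp add: vec_eq_iff)
qed

end

locale event_triggered_lq = prob_space M for M :: "'a measure" +
  fixes A :: "real^'n^'n" and B :: "real^'m^'n"
    and W M0 Q :: "real^'n^'n" and R :: "real^'m^'m" and m0 :: "real^'n"
    and N :: nat
    and x w xhat :: "nat \<Rightarrow> 'a \<Rightarrow> real^'n" and u :: "nat \<Rightarrow> 'a \<Rightarrow> real^'m"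
    and \<tau> :: "nat \<Rightarrow> 'a \<Rightarrow> nat" and \<delta> :: "nat \<Rightarrow> 'a \<Rightarrow> bool" and \<nu> :: "nat \<Rightarrow> 'a \<Rightarrow> real"
    and k :: nat
  assumes W_pd: "pd_mat W"
    and x0_gauss: "gaussian_vec M (x 0) m0 M0"
    and w_gauss: "\<forall>j. gaussian_vec M (w j) 0 W"
    and tau_meas: "\<forall>j. \<tau> j \<in> measurable M (count_space UNIV)"
    and nu_meas: "\<forall>j. \<nu> j \<in> borel_measurable M"
    and indep: "prob_space.indep_sets M (prim_sets M (x 0) w \<tau> \<nu>) UNIV"
    and dyn: "\<forall>j. \<forall>\<omega>\<in>space M. x (Suc j) \<omega> = A *v x j \<omega> + B *v u j \<omega> + w j \<omega>"
    and ctrl: "\<forall>j\<le>N. \<forall>\<omega>\<in>space M. u j \<omega> = - (gain_L A B Q R N j *v xhat j \<omega>)"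
    and est0: "\<forall>\<omega>\<in>space M. xhat 0 \<omega> = m0"
    and est: "\<forall>j. \<forall>\<omega>\<in>space M. xhat (Suc j) \<omega> =
                (if \<delta> j \<omega>
                 then matpow A (zeta \<tau> j \<omega> + 1) *v x (j - zeta \<tau> j \<omega>) \<omega>
                      + (\<Sum>t\<le>zeta \<tau> j \<omega>. matpow A t *v (B *v u (j - t) \<omega>))
                 else A *v xhat j \<omega> + B *v u j \<omega>)"
    and trig: "\<forall>j\<le>N. \<delta> j \<in> measurable
                  (sigma (space M) (info_sets M x u \<delta> \<tau> j \<union> rv_sets M borel (\<nu> j)))
                  (count_space UNIV)"
    and kN: "k \<le> N"
begin

section \<open>Measurability of the trigger's information\<close>

text \<open>
  The measure Rm will be either M or the trace of the sigma-algebra generated by x_0, the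
  delays, the randomisation variables and w_a, a < b, on an event where no measurement
  is more recent than x_b; hence states are only required to be Rm-measurable up to time b.
\<close>
definition trigger_data_measurable :: "'a measure \<Rightarrow> nat \<Rightarrow> nat \<Rightarrow> bool" where
 "trigger_data_measurable Rm b j \<longleftrightarrow>
    (\<forall>t\<le>j. zeta \<tau> t \<in> Rm \<rightarrow>\<^sub>M count_space UNIV
       \<and> (\<lambda>\<omega>. x (t - zeta \<tau> t \<omega>) \<omega>) \<in> borel_measurable Rm
       \<and> eta \<delta> \<tau> t \<in> Rm \<rightarrow>\<^sub>M count_space UNIV
       \<and> (\<lambda>\<omega>. case eta \<delta> \<tau> t \<omega> of enat i \<Rightarrow> x (t - i) \<omega> | \<infinity> \<Rightarrow> 0) \<in> borel_measurable Rm)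
  \<and> (\<forall>s<j. \<delta> s \<in> Rm \<rightarrow>\<^sub>M count_space UNIV \<and> u s \<in> borel_measurable Rm)
  \<and> (\<forall>s\<le>j. xhat s \<in> borel_measurable Rm)
  \<and> (\<forall>i\<le>j. i \<le> b \<longrightarrow> x i \<in> borel_measurable Rm)"

lemma info_sets_Int_space:
  assumes "trigger_data_measurable Rm b j" "space Rm \<subseteq> space M" "G \<in> info_sets M x u \<delta> \<tau> j"
  shows "G \<inter> space Rm \<in> sets Rm"
  using assms unfolding info_sets_def trigger_data_measurable_def by (blast intro: rv_sets_Int_space)

lemma measurable_delta:
  assumes "trigger_data_measurable Rm b j" "space Rm \<subseteq> space M" "\<nu> j \<in> borel_measurable Rm" "j \<le> N"
  shows "\<delta> j \<in> Rm \<rightarrow>\<^sub>M count_space UNIV"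
proof -
  have "(\<lambda>\<omega>. \<omega>) \<in> Rm \<rightarrow>\<^sub>M sigma (space M) (info_sets M x u \<delta> \<tau> j \<union> rv_sets M borel (\<nu> j))"
  proof (rule measurable_ident_sigma)
    show "info_sets M x u \<delta> \<tau> j \<union> rv_sets M borel (\<nu> j) \<subseteq> Pow (space M)"
      using info_sets_subset_Pow rv_sets_subset_Pow by blast
    fix G assume "G \<in> info_sets M x u \<delta> \<tau> j \<union> rv_sets M borel (\<nu> j)"
    then show "G \<inter> space Rm \<in> sets Rm"
      using info_sets_Int_space[OF assms(1,2)] rv_sets_Int_space[OF assms(3,2)] by blast
  qed (use assms(2) in auto)
  then show ?thesis using measurable_compose[OF _ trig[rule_format, OF assms(4)]] by blast
qed

lemma measurable_u:
  assumes "xhat j \<in> borel_measurable Rm" "space Rm \<subseteq> space M" "j \<le> N"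
  shows "u j \<in> borel_measurable Rm"
proof -
  have "(\<lambda>\<omega>. - (gain_L A B Q R N j *v xhat j \<omega>)) \<in> borel_measurable Rm"
    using borel_measurable_matrix_vector_mult[OF assms(1)] by measurable
  then show ?thesis
    by (rule measurable_cong[THEN iffD1, rotated]) (use ctrl assms in auto)
qed

lemma measurable_x_Suc:
  assumes "space Rm \<subseteq> space M" "x j \<in> borel_measurable Rm" "u j \<in> borel_measurable Rm"
    "w j \<in> borel_measurable Rm"
  shows "x (Suc j) \<in> borel_measurable Rm"
proof -
  have "(\<lambda>\<omega>. A *v x j \<omega> + B *v u j \<omega> + w j \<omega>) \<in> borel_measurable Rm"
    using borel_measurable_matrix_vector_mult[OF assms(2)] borel_measurable_matrix_vector_mult[OF assms(3)]
      assms(4) by measurable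
  then show ?thesis
    by (rule measurable_cong[THEN iffD1, rotated]) (use dyn assms(1) in auto)
qed

lemma measurable_xhat_Suc:
  assumes "xhat j \<in> borel_measurable Rm" "space Rm \<subseteq> space M"
    and "\<delta> j \<in> Rm \<rightarrow>\<^sub>M count_space UNIV" "zeta \<tau> j \<in> Rm \<rightarrow>\<^sub>M count_space UNIV"
    and "(\<lambda>\<omega>. x (j - zeta \<tau> j \<omega>) \<omega>) \<in> borel_measurable Rm"
    and "\<And>s. s \<le> j \<Longrightarrow> u s \<in> borel_measurable Rm"
  shows "xhat (Suc j) \<in> borel_measurable Rm"
proof -
  define y where "y = (\<lambda>\<omega>. x (j - zeta \<tau> j \<omega>) \<omega>)"
  define transmitted where "transmitted \<omega> = matpow A (zeta \<tau> j \<omega> + 1) *v y \<omega>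
      + (\<Sum>t\<le>zeta \<tau> j \<omega>. matpow A t *v (B *v u (j - t) \<omega>))" for \<omega>
  have "(\<lambda>\<omega>. matpow A (zeta \<tau> j \<omega> + 1) *v y \<omega>) \<in> borel_measurable Rm"
    using measurable_compose_countable[where f="\<lambda>i \<omega>. matpow A (i + 1) *v y \<omega>",
        OF borel_measurable_matrix_vector_mult assms(4)] assms(5) by (simp add: y_def)
  moreover have "(\<lambda>\<omega>. \<Sum>t\<le>zeta \<tau> j \<omega>. matpow A t *v (B *v u (j - t) \<omega>)) \<in> borel_measurable Rm"
    by (rule measurable_compose_countable[where f="\<lambda>i \<omega>. \<Sum>t\<le>i. matpow A t *v (B *v u (j - t) \<omega>)", OF _ assms(4)])
       (intro borel_measurable_sum borel_measurable_matrix_vector_mult assms(6), simp)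
  ultimately have "transmitted \<in> borel_measurable Rm"
    unfolding transmitted_def by measurable
  moreover have "(\<lambda>\<omega>. A *v xhat j \<omega> + B *v u j \<omega>) \<in> borel_measurable Rm"
    using borel_measurable_matrix_vector_mult[OF assms(1)] borel_measurable_matrix_vector_mult[OF assms(6)]
    by measurable
  ultimately have "(\<lambda>\<omega>. if \<delta> j \<omega> then transmitted \<omega> else A *v xhat j \<omega> + B *v u j \<omega>) \<in> borel_measurable Rm"
    by (rule measurable_If_count_space[OF assms(3)])
  then show ?thesis
    by (rule measurable_cong[THEN iffD1, rotated]) (use est assms(2) in \<open>auto simp: transmitted_def y_def\<close>)
qed

lemma measurable_eta_Suc:
  assumes "\<delta> j \<in> Rm \<rightarrow>\<^sub>M count_space UNIV" "zeta \<tau> j \<in> Rm \<rightarrow>\<^sub>M count_space UNIV"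
    "eta \<delta> \<tau> j \<in> Rm \<rightarrow>\<^sub>M count_space UNIV"
  shows "eta \<delta> \<tau> (Suc j) \<in> Rm \<rightarrow>\<^sub>M count_space UNIV"
proof -
  have "(\<lambda>\<omega>. enat (zeta \<tau> j \<omega> + 1)) \<in> Rm \<rightarrow>\<^sub>M count_space UNIV"
    using measurable_compose[OF assms(2), where g="\<lambda>z. enat (z + 1)" and L="count_space UNIV"] by simp
  moreover have "(\<lambda>\<omega>. eta \<delta> \<tau> j \<omega> + 1) \<in> Rm \<rightarrow>\<^sub>M count_space UNIV"
    using measurable_compose[OF assms(3), where g="\<lambda>e. e + 1" and L="count_space UNIV"] by simp
  ultimately have "(\<lambda>\<omega>. if \<delta> j \<omega> then enat (zeta \<tau> j \<omega> + 1) else eta \<delta> \<tau> j \<omega> + 1)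
      \<in> Rm \<rightarrow>\<^sub>M count_space UNIV"
    by (rule measurable_If_count_space[OF assms(1)])
  then show ?thesis by (simp add: eta.simps(2)[abs_def])
qed

lemma measurable_measurements:
  assumes states: "\<And>i. i \<le> t \<Longrightarrow> i \<le> b \<Longrightarrow> x i \<in> borel_measurable Rm"
    and gap: "\<And>\<omega>. \<omega> \<in> space Rm \<Longrightarrow> t - zeta \<tau> t \<omega> \<le> b"
    and zeta: "zeta \<tau> t \<in> Rm \<rightarrow>\<^sub>M count_space UNIV" and eta: "eta \<delta> \<tau> t \<in> Rm \<rightarrow>\<^sub>M count_space UNIV"
  shows "(\<lambda>\<omega>. x (t - zeta \<tau> t \<omega>) \<omega>) \<in> borel_measurable Rm"
    and "(\<lambda>\<omega>. case eta \<delta> \<tau> t \<omega> of enat i \<Rightarrow> x (t - i) \<omega> | \<infinity> \<Rightarrow> 0) \<in> borel_measurable Rm"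
proof -
  have "(\<lambda>\<omega>. t - zeta \<tau> t \<omega>) \<in> Rm \<rightarrow>\<^sub>M count_space UNIV"
    using measurable_compose[OF zeta, where g="\<lambda>z. t - z" and L="count_space UNIV"] by simp
  then show "(\<lambda>\<omega>. x (t - zeta \<tau> t \<omega>) \<omega>) \<in> borel_measurable Rm"
    by (rule measurable_compose_countable_on[where f=x and I="{i. i \<le> t \<and> i \<le> b}"])
       (simp_all add: gap states)
  have "t - i \<le> b" if "\<omega> \<in> space Rm" "eta \<delta> \<tau> t \<omega> = enat i" for \<omega> i
    using zeta_le_eta[of \<tau> t \<omega> \<delta>] gap[OF that(1)] that(2) by simp
  then show "(\<lambda>\<omega>. case eta \<delta> \<tau> t \<omega> of enat i \<Rightarrow> x (t - i) \<omega> | \<infinity> \<Rightarrow> 0) \<in> borel_measurable Rm"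
  proof (intro measurable_compose_countable_on[OF eta, where I="{e. \<forall>i. e = enat i \<longrightarrow> t - i \<le> b}"
        and f="\<lambda>e \<omega>. case e of enat i \<Rightarrow> x (t - i) \<omega> | \<infinity> \<Rightarrow> 0"])
    fix e :: enat assume "e \<in> {e. \<forall>i. e = enat i \<longrightarrow> t - i \<le> b}"
    then show "(\<lambda>\<omega>. case e of enat i \<Rightarrow> x (t - i) \<omega> | \<infinity> \<Rightarrow> 0) \<in> borel_measurable Rm"
      by (cases e) (simp_all add: states)
  qed simp
qed

lemma trigger_data_measurable_0:
  assumes "space Rm \<subseteq> space M" "x 0 \<in> borel_measurable Rm" "\<And>i. \<tau> i \<in> Rm \<rightarrow>\<^sub>M count_space UNIV"
  shows "trigger_data_measurable Rm b 0"
proof -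
  have "xhat 0 \<in> borel_measurable Rm"
    by (rule measurable_cong[THEN iffD1, rotated, of "\<lambda>_. m0"]) (use est0 assms(1) in auto)
  moreover have "zeta \<tau> 0 = (\<lambda>_. 0)" "eta \<delta> \<tau> 0 = (\<lambda>_. \<infinity>)" by auto
  ultimately show ?thesis using assms(2) by (simp add: trigger_data_measurable_def)
qed

lemma trigger_data_measurable_Suc:
  assumes sp: "space Rm \<subseteq> space M" and wR: "\<And>i. i < b \<Longrightarrow> w i \<in> borel_measurable Rm"
    and tauR: "\<And>i. \<tau> i \<in> Rm \<rightarrow>\<^sub>M count_space UNIV" and nuR: "\<And>i. \<nu> i \<in> borel_measurable Rm"
    and gap: "\<And>\<omega>. \<omega> \<in> space Rm \<Longrightarrow> Suc j - zeta \<tau> (Suc j) \<omega> \<le> b"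
    and "j \<le> N" and IH: "trigger_data_measurable Rm b j"
  shows "trigger_data_measurable Rm b (Suc j)"
proof -
  have dj: "\<delta> j \<in> Rm \<rightarrow>\<^sub>M count_space UNIV" using measurable_delta[OF IH sp nuR \<open>j \<le> N\<close>] .
  have zj: "zeta \<tau> j \<in> Rm \<rightarrow>\<^sub>M count_space UNIV" and ej: "eta \<delta> \<tau> j \<in> Rm \<rightarrow>\<^sub>M count_space UNIV"
    and xzj: "(\<lambda>\<omega>. x (j - zeta \<tau> j \<omega>) \<omega>) \<in> borel_measurable Rm"
    and xhj: "xhat j \<in> borel_measurable Rm"
    using IH unfolding trigger_data_measurable_def by auto
  have uj: "u j \<in> borel_measurable Rm" using measurable_u[OF xhj sp \<open>j \<le> N\<close>] .
  then have us: "\<And>s. s \<le> j \<Longrightarrow> u s \<in> borel_measurable Rm"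
    using IH unfolding trigger_data_measurable_def by (auto simp: le_less)
  have xS: "x i \<in> borel_measurable Rm" if "i \<le> Suc j" "i \<le> b" for i
  proof (cases "i = Suc j")
    case True
    then have "x j \<in> borel_measurable Rm" "w j \<in> borel_measurable Rm"
      using IH wR that unfolding trigger_data_measurable_def by auto
    then show ?thesis using measurable_x_Suc[OF sp _ uj] True by simp
  qed (use IH that in \<open>simp add: trigger_data_measurable_def\<close>)
  have zS: "zeta \<tau> (Suc j) \<in> Rm \<rightarrow>\<^sub>M count_space UNIV" using measurable_zeta[OF tauR] .
  have eS: "eta \<delta> \<tau> (Suc j) \<in> Rm \<rightarrow>\<^sub>M count_space UNIV" using measurable_eta_Suc[OF dj zj ej] .
  note measS = measurable_measurements[OF xS gap zS eS]
  have xhS: "xhat (Suc j) \<in> borel_measurable Rm" using measurable_xhat_Suc[OF xhj sp dj zj xzj us] .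
  have all_le_Suc: "\<And>P. (\<forall>t\<le>Suc j. P t) \<longleftrightarrow> (\<forall>t\<le>j. P t) \<and> P (Suc j)"
    and all_less_Suc: "\<And>P. (\<forall>s<Suc j. P s) \<longleftrightarrow> (\<forall>s<j. P s) \<and> P j"
    by (auto simp: le_Suc_eq less_Suc_eq)
  show ?thesis
    using IH dj uj xhS xS zS eS measS
    unfolding trigger_data_measurable_def all_le_Suc all_less_Suc by blast
qed

lemma trigger_data_measurable_upto:
  assumes sp: "space Rm \<subseteq> space M" and x0R: "x 0 \<in> borel_measurable Rm"
    and wR: "\<And>i. i < b \<Longrightarrow> w i \<in> borel_measurable Rm"
    and tauR: "\<And>i. \<tau> i \<in> Rm \<rightarrow>\<^sub>M count_space UNIV" and nuR: "\<And>i. \<nu> i \<in> borel_measurable Rm"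
    and gap: "\<And>\<omega> t. \<omega> \<in> space Rm \<Longrightarrow> t \<le> J \<Longrightarrow> t - zeta \<tau> t \<omega> \<le> b"
    and "J \<le> Suc N"
  shows "j \<le> J \<Longrightarrow> trigger_data_measurable Rm b j"
proof (induction j)
  case 0
  show ?case by (rule trigger_data_measurable_0[OF sp x0R tauR])
next
  case (Suc j)
  then show ?case
    using trigger_data_measurable_Suc[OF sp wR tauR nuR gap] \<open>J \<le> Suc N\<close> by simp
qed


lemma x0_measurable: "x 0 \<in> borel_measurable M"
  using x0_gauss unfolding gaussian_vec_def by auto

lemma w_measurable: "w i \<in> borel_measurable M"
  using w_gauss unfolding gaussian_vec_def by auto

lemma trigger_data_measurable_M: "trigger_data_measurable M (Suc k) (Suc k)"
  by (rule trigger_data_measurable_upto[where J="Suc k"])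
     (use x0_measurable w_measurable tau_meas nu_meas kN in \<open>auto intro: le_trans[OF diff_le_self]\<close>)

lemma measurable_delta_M: "s \<le> k \<Longrightarrow> \<delta> s \<in> M \<rightarrow>\<^sub>M count_space UNIV"
  using trigger_data_measurable_M unfolding trigger_data_measurable_def by auto

lemma info_sets_subset_sets: "j \<le> Suc k \<Longrightarrow> info_sets M x u \<delta> \<tau> j \<subseteq> sets M"
proof
  fix G assume "j \<le> Suc k" and G: "G \<in> info_sets M x u \<delta> \<tau> j"
  then have "trigger_data_measurable M (Suc k) j"
    using trigger_data_measurable_M unfolding trigger_data_measurable_def by auto
  then have "G \<inter> space M \<in> sets M" using info_sets_Int_space G by blast
  moreover have "G \<subseteq> space M" using G info_sets_subset_Pow by blast
  ultimately show "G \<in> sets M" by (simp add: Int_absorb2)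
qed

abbreviation info_k :: "'a measure" where
  "info_k \<equiv> info_alg M x u \<delta> \<tau> k"

definition info_decision_k :: "'a measure" where
  "info_decision_k = sigma (space M) (info_sets M x u \<delta> \<tau> k \<union> rv_sets M (count_space UNIV) (\<delta> k))"

lemma info_decision_sets_subset_Pow: "info_sets M x u \<delta> \<tau> k \<union> rv_sets M (count_space UNIV) (\<delta> k) \<subseteq> Pow (space M)"
  using info_sets_subset_Pow rv_sets_subset_Pow by blast

lemma space_info_decision_k: "space info_decision_k = space M"
  unfolding info_decision_k_def using info_decision_sets_subset_Pow by (rule space_measure_of)

lemma sets_info_decision_k: "sets info_decision_k = sigma_sets (space M) (info_sets M x u \<delta> \<tau> k \<union> rv_sets M (count_space UNIV) (\<delta> k))"
  unfolding info_decision_k_def using info_decision_sets_subset_Pow by (rule sets_measure_of)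

lemma space_info_k: "space info_k = space M"
  unfolding info_alg_def using info_sets_subset_Pow by (rule space_measure_of)

lemma sets_info_k: "sets info_k = sigma_sets (space M) (info_sets M x u \<delta> \<tau> k)"
  unfolding info_alg_def using info_sets_subset_Pow by (rule sets_measure_of)

lemma subalgebra_info_decision_k: "subalgebra M info_decision_k"
proof -
  have "info_sets M x u \<delta> \<tau> k \<union> rv_sets M (count_space UNIV) (\<delta> k) \<subseteq> sets M"
    using info_sets_subset_sets[of k] rv_sets_subset_sets[OF measurable_delta_M] by auto
  then show ?thesis
    unfolding subalgebra_def space_info_decision_k sets_info_decision_k by (simp add: sets.sigma_sets_subset)
qed

lemma subalgebra_info_k: "subalgebra M info_k"
  unfolding subalgebra_def space_info_k sets_info_k
  using sets.sigma_sets_subset[OF info_sets_subset_sets[of k]] by simp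

lemma subalgebra_info_decision_info_k: "subalgebra info_decision_k info_k"
  unfolding subalgebra_def space_info_k sets_info_k space_info_decision_k sets_info_decision_k
  by (simp add: sigma_sets_mono')

lemma sets_info_decision_k_subset_events: "G \<in> sets info_decision_k \<Longrightarrow> G \<in> events"
  using subalgebra_info_decision_k unfolding subalgebra_def by auto

lemma measurable_info_k_info_decision_k: "f \<in> info_k \<rightarrow>\<^sub>M N' \<Longrightarrow> f \<in> info_decision_k \<rightarrow>\<^sub>M N'"
  by (rule measurable_from_subalg[OF subalgebra_info_decision_info_k])

lemma measurable_info_k:
  assumes "rv_sets M N' Y \<subseteq> info_sets M x u \<delta> \<tau> k" "space N' = UNIV"
  shows "Y \<in> info_k \<rightarrow>\<^sub>M N'"
  unfolding info_alg_def by (rule measurable_sigma_rv_sets[OF info_sets_subset_Pow assms(1) refl assms(2)])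

lemma measurable_delta_k_info_decision_k: "\<delta> k \<in> info_decision_k \<rightarrow>\<^sub>M count_space UNIV"
  unfolding info_decision_k_def by (rule measurable_sigma_rv_sets[OF info_decision_sets_subset_Pow]) auto

definition pre_noise_sets :: "nat \<Rightarrow> 'a set set" where
  "pre_noise_sets b = (\<Union>i\<in>{i. \<forall>a. i = PW a \<longrightarrow> a < b}. prim_sets M (x 0) w \<tau> \<nu> i)"

definition pre_noise_alg :: "nat \<Rightarrow> 'a measure" where
  "pre_noise_alg b = sigma (space M) (pre_noise_sets b)"

definition age_event :: "nat \<Rightarrow> 'a set" where
  "age_event c = {\<omega> \<in> space M. zeta \<tau> k \<omega> = c}"

lemma pre_noise_sets_subset_Pow: "pre_noise_sets b \<subseteq> Pow (space M)"
  unfolding pre_noise_sets_def prim_sets_def rv_sets_def by (auto split: prim_idx.splits)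

lemma space_pre_noise_alg: "space (pre_noise_alg b) = space M"
  unfolding pre_noise_alg_def using pre_noise_sets_subset_Pow by (rule space_measure_of)

lemma sets_pre_noise_alg: "sets (pre_noise_alg b) = sigma_sets (space M) (pre_noise_sets b)"
  unfolding pre_noise_alg_def using pre_noise_sets_subset_Pow by (rule sets_measure_of)

lemma measurable_pre_noise_alg:
  shows "x 0 \<in> borel_measurable (pre_noise_alg b)"
    and "a < b \<Longrightarrow> w a \<in> borel_measurable (pre_noise_alg b)"
    and "\<tau> i \<in> pre_noise_alg b \<rightarrow>\<^sub>M count_space UNIV"
    and "\<nu> i \<in> borel_measurable (pre_noise_alg b)"
proof -
  have gen: "\<And>N' Y p. rv_sets M N' Y = prim_sets M (x 0) w \<tau> \<nu> p \<Longrightarrow> (\<And>a. p = PW a \<Longrightarrow> a < b)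
      \<Longrightarrow> space N' = UNIV \<Longrightarrow> Y \<in> pre_noise_alg b \<rightarrow>\<^sub>M N'"
    unfolding pre_noise_alg_def
    by (intro measurable_sigma_rv_sets[OF pre_noise_sets_subset_Pow]) (auto simp: pre_noise_sets_def)
  from gen[of borel "x 0" PX0] gen[of borel "w a" "PW a"] gen[of "count_space UNIV" "\<tau> i" "PTau i"]
    gen[of borel "\<nu> i" "PNu i"]
  show "x 0 \<in> borel_measurable (pre_noise_alg b)"
    and "a < b \<Longrightarrow> w a \<in> borel_measurable (pre_noise_alg b)"
    and "\<tau> i \<in> pre_noise_alg b \<rightarrow>\<^sub>M count_space UNIV"
    and "\<nu> i \<in> borel_measurable (pre_noise_alg b)"
    by (simp_all add: prim_sets_def)
qed

lemma age_event_in_pre_noise_alg: "age_event c \<in> sets (pre_noise_alg b)"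
proof -
  have "zeta \<tau> k \<in> pre_noise_alg b \<rightarrow>\<^sub>M count_space UNIV"
    by (rule measurable_zeta[OF measurable_pre_noise_alg(3)])
  from measurable_sets[OF this, of "{c}"] show ?thesis
    by (simp add: age_event_def space_pre_noise_alg vimage_def Int_def conj_commute)
qed

lemma trigger_data_measurable_age_event:
  "trigger_data_measurable (restrict_space (pre_noise_alg (k - c)) (age_event c)) (k - c) k"
proof (rule trigger_data_measurable_upto[where J=k])
  fix \<omega> t assume "\<omega> \<in> space (restrict_space (pre_noise_alg (k - c)) (age_event c))" "t \<le> k"
  then show "t - zeta \<tau> t \<omega> \<le> k - c"
    using diff_zeta_mono[of t k \<tau> \<omega>] by (auto simp: space_restrict_space space_pre_noise_alg age_event_def)
qed (use kN in \<open>auto intro: measurable_restrict_space1 measurable_pre_noise_alg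
      simp: space_restrict_space space_pre_noise_alg age_event_def\<close>)

text \<open>This is where the age of information enters.\<close>
lemma info_decision_k_Int_age_event:
  assumes G: "G \<in> sets info_decision_k"
  shows "G \<inter> age_event c \<in> sigma_sets (space M) (pre_noise_sets (k - c))"
proof -
  let ?R = "restrict_space (pre_noise_alg (k - c)) (age_event c)"
  have sp: "space ?R = age_event c" and spM: "space ?R \<subseteq> space M"
    by (auto simp: space_restrict_space space_pre_noise_alg age_event_def)
  note data = trigger_data_measurable_age_event[of c]
  have dk: "\<delta> k \<in> ?R \<rightarrow>\<^sub>M count_space UNIV"
    by (rule measurable_delta[OF data spM measurable_restrict_space1[OF measurable_pre_noise_alg(4)] kN])
  have "(\<lambda>\<omega>. \<omega>) \<in> ?R \<rightarrow>\<^sub>M info_decision_k"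
    unfolding info_decision_k_def
  proof (rule measurable_ident_sigma[OF info_decision_sets_subset_Pow spM])
    fix G assume "G \<in> info_sets M x u \<delta> \<tau> k \<union> rv_sets M (count_space UNIV) (\<delta> k)"
    then show "G \<inter> space ?R \<in> sets ?R"
      using info_sets_Int_space[OF data spM] rv_sets_Int_space[OF dk spM] by blast
  qed
  from measurable_sets[OF this G] have "G \<inter> age_event c \<in> sets ?R" by (simp add: sp)
  moreover have "age_event c \<inter> space (pre_noise_alg (k - c)) = age_event c"
    by (auto simp: age_event_def space_pre_noise_alg)
  ultimately have "G \<inter> age_event c \<in> sets (pre_noise_alg (k - c))"
    using sets_restrict_space_iff[of "age_event c" "pre_noise_alg (k - c)"] age_event_in_pre_noise_alg
    by simp
  then show ?thesis by (simp add: sets_pre_noise_alg)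
qed

section \<open>Independence of the future noises\<close>

lemma prim_sets_subset_events: "prim_sets M (x 0) w \<tau> \<nu> p \<subseteq> events"
  by (cases p) (auto simp: prim_sets_def intro!: rv_sets_subset_sets x0_measurable w_measurable
      tau_meas[rule_format] nu_meas[rule_format])

lemma Int_stable_prim_sets: "Int_stable (prim_sets M (x 0) w \<tau> \<nu> p)"
  by (cases p) (auto simp: prim_sets_def Int_stable_rv_sets)

lemma pre_noise_sigma_sets_subset_events:
  "S \<in> sigma_sets (space M) (pre_noise_sets b) \<Longrightarrow> S \<in> events"
proof -
  have "pre_noise_sets b \<subseteq> events"
    using prim_sets_subset_events by (auto simp: pre_noise_sets_def)
  then show "S \<in> sigma_sets (space M) (pre_noise_sets b) \<Longrightarrow> S \<in> events"
    using sets.sigma_sets_subset by blast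
qed

lemma indep_vars_indicator_noises:
  fixes f :: "nat \<Rightarrow> real^'n \<Rightarrow> real"
  assumes S: "S \<in> sigma_sets (space M) (pre_noise_sets b)" and T: "\<And>a. a \<in> T \<Longrightarrow> b \<le> a"
    and f: "\<And>a. a \<in> T \<Longrightarrow> f a \<in> borel_measurable borel"
  shows "indep_vars (\<lambda>_. borel) (\<lambda>j. case j of None \<Rightarrow> indicator S | Some a \<Rightarrow> (\<lambda>\<omega>. f a (w a \<omega>)))
           (insert None (Some ` T))"
    (is "indep_vars _ ?X ?J")
proof -
  define I where "I j = (case j of None \<Rightarrow> {p. \<forall>a. p = PW a \<longrightarrow> a < b} | Some a \<Rightarrow> {PW a})" for j
  let ?\<sigma> = "\<lambda>j. sigma (space M) (\<Union>p\<in>I j. prim_sets M (x 0) w \<tau> \<nu> p)"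
  have gens: "(\<Union>p\<in>I j. prim_sets M (x 0) w \<tau> \<nu> p) \<subseteq> Pow (space M)" for j
    using prim_sets_subset_events sets.sets_into_space by blast
  have indep_\<sigma>: "indep_sets (\<lambda>j. sigma_sets (space M) (\<Union>p\<in>I j. prim_sets M (x 0) w \<tau> \<nu> p)) ?J"
    by (rule indep_sets_collect_sigma[OF indep_sets_mono_index[OF subset_UNIV indep] Int_stable_prim_sets])
       (use T in \<open>fastforce simp: disjoint_family_on_def I_def split: option.splits\<close>)
  have X_\<sigma>: "?X j \<in> ?\<sigma> j \<rightarrow>\<^sub>M borel" if "j \<in> ?J" for j
  proof (cases j)
    case None
    have "S \<in> sets (?\<sigma> None)"
      using S sets_measure_of[OF gens[of None]] by (simp add: I_def pre_noise_sets_def)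
    then show ?thesis using None by simp
  next
    case (Some a)
    have "w a \<in> ?\<sigma> j \<rightarrow>\<^sub>M borel"
      using Some by (intro measurable_sigma_rv_sets[OF gens]) (auto simp: I_def prim_sets_def)
    then show ?thesis using Some that measurable_compose[OF _ f] by auto
  qed
  have "indep_sets (\<lambda>j. rv_sets M borel (?X j)) ?J"
  proof (rule indep_sets_mono_sets[OF indep_\<sigma>])
    fix j assume "j \<in> ?J"
    show "rv_sets M borel (?X j) \<subseteq> sigma_sets (space M) (\<Union>p\<in>I j. prim_sets M (x 0) w \<tau> \<nu> p)"
      by (rule rv_sets_subset_sigma_sets[OF X_\<sigma>[OF \<open>j \<in> ?J\<close>] gens])
  qed
  moreover have "random_variable borel (?X j)" if "j \<in> ?J" for j
    using that pre_noise_sigma_sets_subset_events[OF S] measurable_compose[OF w_measurable f] by auto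
  ultimately show ?thesis
    unfolding indep_vars_def2 rv_sets_def by blast
qed

lemma integral_indicator_mult_prod_noises:
  fixes f :: "nat \<Rightarrow> real^'n \<Rightarrow> real"
  assumes S: "S \<in> sigma_sets (space M) (pre_noise_sets b)" and T: "finite T" "\<And>a. a \<in> T \<Longrightarrow> b \<le> a"
    and f: "\<And>a. a \<in> T \<Longrightarrow> f a \<in> borel_measurable borel" "\<And>a. a \<in> T \<Longrightarrow> integrable M (\<lambda>\<omega>. f a (w a \<omega>))"
  shows "(\<integral>\<omega>. indicator S \<omega> * (\<Prod>a\<in>T. f a (w a \<omega>)) \<partial>M) = prob S * (\<Prod>a\<in>T. expectation (\<lambda>\<omega>. f a (w a \<omega>)))"
proof -
  define X where "X j = (case j of None \<Rightarrow> indicator S | Some a \<Rightarrow> (\<lambda>\<omega>. f a (w a \<omega>)))" for j :: "nat option"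
  define J where "J = insert None (Some ` T)"
  have "(\<integral>\<omega>. (\<Prod>j\<in>J. X j \<omega>) \<partial>M) = (\<Prod>j\<in>J. \<integral>\<omega>. X j \<omega> \<partial>M)"
  proof (rule indep_vars_lebesgue_integral)
    show "finite J" using T(1) by (simp add: J_def)
    show "indep_vars (\<lambda>_. borel) X J"
      unfolding X_def J_def by (rule indep_vars_indicator_noises[OF S T(2) f(1)])
    fix j assume "j \<in> J"
    then show "integrable M (X j)"
      using f(2) pre_noise_sigma_sets_subset_events[OF S]
      by (auto simp: J_def X_def integrable_indicator_iff less_top[symmetric] Int_absorb2 sets.sets_into_space)
  qed
  moreover have "(\<Prod>j\<in>J. g j) = g None * (\<Prod>a\<in>T. g (Some a))" for g :: "nat option \<Rightarrow> real"
    using T(1) by (simp add: J_def prod.reindex)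
  ultimately show ?thesis
    using pre_noise_sigma_sets_subset_events[OF S] by (simp add: X_def)
qed

lemma noise_nth_moments:
  shows "integrable M (\<lambda>\<omega>. w a \<omega> $ l)" "expectation (\<lambda>\<omega>. w a \<omega> $ l) = 0"
    and "integrable M (\<lambda>\<omega>. (w a \<omega> $ l)\<^sup>2)"
  using gaussian_vec_inner_moments[OF w_gauss[rule_format, of a], of "axis l 1"] by (simp_all add: inner_axis')

lemma integrable_noise_nth_mult: "integrable M (\<lambda>\<omega>. w a \<omega> $ l * w a' \<omega> $ l')"
proof (rule Bochner_Integration.integrable_bound)
  show "integrable M (\<lambda>\<omega>. (w a \<omega> $ l)\<^sup>2 + (w a' \<omega> $ l')\<^sup>2)"
    by (intro Bochner_Integration.integrable_add noise_nth_moments(3))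
  show "(\<lambda>\<omega>. w a \<omega> $ l * w a' \<omega> $ l') \<in> borel_measurable M"
    using borel_measurable_vec_nth[OF w_measurable] by measurable
  have "\<bar>p * q\<bar> \<le> p\<^sup>2 + q\<^sup>2" for p q :: real
  proof -
    have "2 * (\<bar>p\<bar> * \<bar>q\<bar>) \<le> p\<^sup>2 + q\<^sup>2" using sum_squares_bound[of "\<bar>p\<bar>" "\<bar>q\<bar>"] by (simp add: mult.assoc)
    moreover have "0 \<le> \<bar>p\<bar> * \<bar>q\<bar>" by simp
    ultimately show ?thesis unfolding abs_mult by linarith
  qed
  then show "AE \<omega> in M. norm (w a \<omega> $ l * w a' \<omega> $ l') \<le> norm ((w a \<omega> $ l)\<^sup>2 + (w a' \<omega> $ l')\<^sup>2)"
    by simp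
qed

lemma expectation_noise_nth_mult: "expectation (\<lambda>\<omega>. w a \<omega> $ l * w a \<omega> $ l') = W $ l $ l'"
proof -
  define p :: "real^'n" where "p = axis l 1 + axis l' 1"
  define q :: "real^'n" where "q = axis l 1 - axis l' 1"
  note mp = gaussian_vec_inner_moments[OF w_gauss[rule_format, of a], of p]
  note mq = gaussian_vec_inner_moments[OF w_gauss[rule_format, of a], of q]
  have polarization: "w a \<omega> $ l * w a \<omega> $ l' = (p \<bullet> w a \<omega>)\<^sup>2 / 4 - (q \<bullet> w a \<omega>)\<^sup>2 / 4" for \<omega>
    by (simp add: p_def q_def inner_add_left inner_diff_left inner_axis') (simp add: power2_eq_square field_simps)
  have "expectation (\<lambda>\<omega>. w a \<omega> $ l * w a \<omega> $ l') = p \<bullet> (W *v p) / 4 - q \<bullet> (W *v q) / 4"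
    unfolding polarization using mp mq by simp
  also have "\<dots> = W $ l $ l'"
    using symmetric_nth[of W l l'] W_pd unfolding pd_mat_def
    by (simp add: p_def q_def inner_add_left inner_diff_left inner_add_right inner_diff_right
        matrix_vector_right_distrib matrix_vector_mult_diff_distrib axis_inner_matrix_vector_mult algebra_simps)
       (simp add: field_simps)
  finally show ?thesis .
qed

lemma integral_indicator_mult_noise_nth:
  assumes "S \<in> sigma_sets (space M) (pre_noise_sets b)" "b \<le> a"
  shows "(\<integral>\<omega>. indicator S \<omega> * w a \<omega> $ l \<partial>M) = 0"
  using integral_indicator_mult_prod_noises[OF assms(1), of "{a}" "\<lambda>_ v. v $ l"] assms(2)
  by (simp add: noise_nth_moments)

lemma integral_indicator_mult_noise_nth_mult:
  assumes S: "S \<in> sigma_sets (space M) (pre_noise_sets b)" and "b \<le> a" "b \<le> a'"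
  shows "(\<integral>\<omega>. indicator S \<omega> * (w a \<omega> $ l * w a' \<omega> $ l') \<partial>M) = prob S * (if a = a' then W $ l $ l' else 0)"
proof (cases "a = a'")
  case True
  then show ?thesis
    using integral_indicator_mult_prod_noises[OF S, of "{a}" "\<lambda>_ v. v $ l * v $ l'"] assms(2)
    by (simp add: integrable_noise_nth_mult expectation_noise_nth_mult)
next
  case False
  have "(\<integral>\<omega>. indicator S \<omega> * (\<Prod>c\<in>{a, a'}. w c \<omega> $ (if c = a then l else l')) \<partial>M)
      = prob S * (\<Prod>c\<in>{a, a'}. expectation (\<lambda>\<omega>. w c \<omega> $ (if c = a then l else l')))"
    by (rule integral_indicator_mult_prod_noises[OF S, where f="\<lambda>c v. v $ (if c = a then l else l')"])
       (use assms(2,3) in \<open>auto simp: noise_nth_moments\<close>)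
  then show ?thesis using False by (simp add: noise_nth_moments)
qed

lemma integrable_u: "j \<le> N \<Longrightarrow> integrable M (xhat j) \<Longrightarrow> integrable M (u j)"
  using integrable_minus[OF integrable_matrix_vector_mult[of M "xhat j" "gain_L A B Q R N j"]] ctrl
  by (simp cong: Bochner_Integration.integrable_cong)

lemma integrable_xhat_Suc:
  assumes "j \<le> k" and x: "\<And>i. i \<le> j \<Longrightarrow> integrable M (x i)" and u: "\<And>i. i \<le> j \<Longrightarrow> integrable M (u i)"
    and "integrable M (xhat j)"
  shows "integrable M (xhat (Suc j))"
proof -
  define transmitted where "transmitted i \<omega> = matpow A (i + 1) *v x (j - i) \<omega>
      + (\<Sum>t\<le>i. matpow A t *v (B *v u (j - t) \<omega>))" for i \<omega>
  have transmitted_int: "integrable M (transmitted i)" if "i \<le> j" for i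
    unfolding transmitted_def using that
    by (intro Bochner_Integration.integrable_add Bochner_Integration.integrable_sum integrable_matrix_vector_mult x u) auto
  have "integrable M (\<lambda>\<omega>. transmitted (zeta \<tau> j \<omega>) \<omega>)"
    by (rule integrable_compose_countable_on[OF measurable_zeta[OF tau_meas[rule_format]], where I="{..j}"])
       (simp_all add: transmitted_int zeta_le)
  moreover have "integrable M (\<lambda>\<omega>. A *v xhat j \<omega> + B *v u j \<omega>)"
    using assms(4) u[of j] by (intro Bochner_Integration.integrable_add integrable_matrix_vector_mult) auto
  ultimately have branches:
      "integrable M (\<lambda>\<omega>. if d then transmitted (zeta \<tau> j \<omega>) \<omega> else A *v xhat j \<omega> + B *v u j \<omega>)" for d
    by (cases d) simp_all
  have "integrable M (\<lambda>\<omega>. (\<lambda>d \<omega>. if d then transmitted (zeta \<tau> j \<omega>) \<omega> else A *v xhat j \<omega> + B *v u j \<omega>) (\<delta> j \<omega>) \<omega>)"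
    by (rule integrable_compose_countable_on[OF measurable_delta_M[OF \<open>j \<le> k\<close>], where I=UNIV])
       (simp_all add: branches)
  then show ?thesis
    using est unfolding transmitted_def by (simp cong: Bochner_Integration.integrable_cong)
qed

lemma integrable_trajectory: "j \<le> Suc k \<Longrightarrow> integrable M (x j) \<and> integrable M (xhat j)"
proof (induction j rule: less_induct)
  case (less j)
  show ?case
  proof (cases j)
    case 0
    have "integrable M (x 0)"
      using gaussian_vec_inner_moments(1)[OF x0_gauss, of "axis _ 1"]
      by (intro integrable_vec_lambda) (simp add: inner_axis')
    then show ?thesis using 0 est0 by (simp cong: Bochner_Integration.integrable_cong)
  next
    case (Suc i)
    then have x: "\<And>i'. i' \<le> i \<Longrightarrow> integrable M (x i')" and xhat: "\<And>i'. i' \<le> i \<Longrightarrow> integrable M (xhat i')"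
      using less by auto
    have u: "\<And>i'. i' \<le> i \<Longrightarrow> integrable M (u i')"
      using Suc less.prems kN integrable_u xhat by simp
    have "integrable M (\<lambda>\<omega>. A *v x i \<omega> + B *v u i \<omega> + w i \<omega>)"
      using x[of i] u[of i] integrable_vec_lambda[OF noise_nth_moments(1)]
      by (intro Bochner_Integration.integrable_add integrable_matrix_vector_mult) auto
    then show ?thesis
      using Suc dyn integrable_xhat_Suc[of i, OF _ x u xhat] less.prems
      by (simp cong: Bochner_Integration.integrable_cong)
  qed
qed

lemma integrable_x: "j \<le> Suc k \<Longrightarrow> integrable M (x j)"
  and integrable_xhat: "j \<le> Suc k \<Longrightarrow> integrable M (xhat j)"
  using integrable_trajectory by auto

section \<open>Splitting off the noise\<close>

definition noise_sum :: "nat \<Rightarrow> nat \<Rightarrow> 'a \<Rightarrow> real^'n" where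
  "noise_sum j c \<omega> = (\<Sum>t<c. matpow A t *v w (j - t) \<omega>)"

definition xcheck :: "'a \<Rightarrow> real^'n" where
  "xcheck \<omega> = matpow A (zeta \<tau> k \<omega>) *v x (k - zeta \<tau> k \<omega>) \<omega>
     + (\<Sum>t<zeta \<tau> k \<omega>. matpow A t *v (B *v u (k - 1 - t) \<omega>))"

definition err :: "'a \<Rightarrow> real^'n" where
  "err \<omega> = x (Suc k) \<omega> - xhat (Suc k) \<omega>"

definition err_mean :: "'a \<Rightarrow> real^'n" where
  "err_mean \<omega> = (if \<delta> k \<omega> then 0 else A *v (xcheck \<omega> - xhat k \<omega>))"

lemma x_unroll:
  assumes "n \<le> j" "\<omega> \<in> space M"
  shows "x j \<omega> = matpow A n *v x (j - n) \<omega> + (\<Sum>t<n. matpow A t *v (B *v u (j - 1 - t) \<omega>))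
                 + noise_sum (j - 1) n \<omega>"
  using assms(1)
proof (induction n)
  case (Suc n)
  have "j - n = Suc (j - Suc n)" using Suc.prems by simp
  then have "x (j - n) \<omega> = A *v x (j - Suc n) \<omega> + B *v u (j - Suc n) \<omega> + w (j - Suc n) \<omega>"
    using dyn assms(2) by simp
  then have "matpow A n *v x (j - n) \<omega> = matpow A (Suc n) *v x (j - Suc n) \<omega>
        + matpow A n *v (B *v u (j - 1 - n) \<omega>) + matpow A n *v w (j - 1 - n) \<omega>"
    by (simp add: matrix_vector_right_distrib matpow_mult_vector_Suc del: matpow.simps)
  with Suc show ?case by (simp add: noise_sum_def algebra_simps del: matpow.simps)
qed (simp add: noise_sum_def)

lemma x_k_eq_xcheck_add_noise: "\<omega> \<in> space M \<Longrightarrow> x k \<omega> = xcheck \<omega> + noise_sum (k - 1) (zeta \<tau> k \<omega>) \<omega>"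
  using x_unroll[OF zeta_le] by (simp add: xcheck_def add.assoc)

lemma noise_sum_Suc: "noise_sum j (Suc c) \<omega> = w j \<omega> + A *v noise_sum (j - 1) c \<omega>"
proof -
  have "noise_sum j (Suc c) \<omega> = w j \<omega> + (\<Sum>t<c. matpow A (Suc t) *v w (j - Suc t) \<omega>)"
    unfolding noise_sum_def by (subst sum.lessThan_Suc_shift) simp
  also have "\<dots> = w j \<omega> + (\<Sum>t<c. A *v (matpow A t *v w (j - 1 - t) \<omega>))"
    by (simp add: matrix_vector_mul_assoc)
  also have "\<dots> = w j \<omega> + A *v noise_sum (j - 1) c \<omega>"
    unfolding noise_sum_def by (simp add: real_vector.linear_sum[OF matrix_vector_mul_linear])
  finally show ?thesis .
qed

lemma err_eq_err_mean_add_noise: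
  assumes "\<omega> \<in> space M"
  shows "err \<omega> = err_mean \<omega> + noise_sum k (Suc (zeta \<tau> k \<omega>)) \<omega>"
proof (cases "\<delta> k \<omega>")
  case True
  let ?z = "zeta \<tau> k \<omega>"
  have "x (Suc k) \<omega> = matpow A (Suc ?z) *v x (k - ?z) \<omega> + (\<Sum>t<Suc ?z. matpow A t *v (B *v u (k - t) \<omega>))
      + noise_sum k (Suc ?z) \<omega>"
    using x_unroll[of "Suc ?z" "Suc k" \<omega>] zeta_le[of \<tau> k \<omega>] assms by simp
  moreover have "xhat (Suc k) \<omega> = matpow A (Suc ?z) *v x (k - ?z) \<omega> + (\<Sum>t<Suc ?z. matpow A t *v (B *v u (k - t) \<omega>))"
    using est assms True by (simp add: lessThan_Suc_atMost del: matpow.simps)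
  ultimately show ?thesis using True by (simp add: err_def err_mean_def del: matpow.simps)
next
  case False
  have "x (Suc k) \<omega> = A *v x k \<omega> + B *v u k \<omega> + w k \<omega>" "xhat (Suc k) \<omega> = A *v xhat k \<omega> + B *v u k \<omega>"
    using dyn est assms False by simp_all
  then have "err \<omega> = A *v (xcheck \<omega> - xhat k \<omega>) + (w k \<omega> + A *v noise_sum (k - 1) (zeta \<tau> k \<omega>) \<omega>)"
    using x_k_eq_xcheck_add_noise[OF assms]
    by (simp add: err_def matrix_vector_right_distrib matrix_vector_mult_diff_distrib algebra_simps)
  then show ?thesis using False by (simp add: err_mean_def noise_sum_Suc)
qed

lemma measurable_info_k_data:
  shows "t \<le> k \<Longrightarrow> zeta \<tau> t \<in> info_k \<rightarrow>\<^sub>M count_space UNIV"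
    and "t \<le> k \<Longrightarrow> (\<lambda>\<omega>. x (t - zeta \<tau> t \<omega>) \<omega>) \<in> borel_measurable info_k"
    and "s < k \<Longrightarrow> \<delta> s \<in> info_k \<rightarrow>\<^sub>M count_space UNIV"
    and "s < k \<Longrightarrow> u s \<in> borel_measurable info_k"
  by (auto intro!: measurable_info_k simp: info_sets_def)

lemma measurable_xhat_info_k: "s \<le> k \<Longrightarrow> xhat s \<in> borel_measurable info_k"
proof (induction s)
  case 0
  show ?case
    by (rule measurable_cong[THEN iffD1, rotated, of "\<lambda>_. m0"]) (use est0 space_info_k in auto)
next
  case (Suc s)
  then show ?case
    by (intro measurable_xhat_Suc) (auto simp: space_info_k intro: measurable_info_k_data)
qed

lemma measurable_xcheck: "xcheck \<in> borel_measurable info_k"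
proof -
  define y where "y = (\<lambda>\<omega>. x (k - zeta \<tau> k \<omega>) \<omega>)"
  have y: "y \<in> borel_measurable info_k" unfolding y_def using measurable_info_k_data(2) by simp
  define h where "h i \<omega> = matpow A i *v y \<omega> + (\<Sum>t<i. matpow A t *v (B *v u (k - 1 - t) \<omega>))" for i \<omega>
  have "(\<lambda>\<omega>. h (zeta \<tau> k \<omega>) \<omega>) \<in> borel_measurable info_k"
  proof (rule measurable_compose_countable_on[OF measurable_info_k_data(1), where I="{..k}"])
    fix i assume "i \<in> {..k}"
    then show "h i \<in> borel_measurable info_k"
      unfolding h_def using y
      by (intro borel_measurable_add borel_measurable_sum borel_measurable_matrix_vector_mult
          measurable_info_k_data(4)) auto
  qed (simp_all add: zeta_le)
  then show ?thesis by (simp add: h_def y_def xcheck_def[abs_def])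
qed

lemma measurable_err_mean: "err_mean \<in> borel_measurable info_decision_k"
proof -
  have "(\<lambda>\<omega>. A *v (xcheck \<omega> - xhat k \<omega>)) \<in> borel_measurable info_decision_k"
    using measurable_info_k_info_decision_k[OF measurable_xcheck] measurable_info_k_info_decision_k[OF measurable_xhat_info_k[OF order_refl]]
    by (intro borel_measurable_matrix_vector_mult) measurable
  then show ?thesis
    unfolding err_mean_def[abs_def] by (rule measurable_If_count_space[OF measurable_delta_k_info_decision_k borel_measurable_const])
qed

lemma integrable_noise_sum: "integrable M (noise_sum j c)"
  unfolding noise_sum_def[abs_def]
  by (intro Bochner_Integration.integrable_sum integrable_matrix_vector_mult
      integrable_vec_lambda noise_nth_moments(1))

lemma integrable_noise_sum_age: "integrable M (\<lambda>\<omega>. noise_sum j (m (zeta \<tau> k \<omega>)) \<omega>)"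
  by (rule integrable_compose_countable_on[OF measurable_zeta[OF tau_meas[rule_format]], where I="{..k}"])
     (simp_all add: zeta_le integrable_noise_sum)

lemma integrable_err: "integrable M err"
  unfolding err_def[abs_def] using integrable_x integrable_xhat by auto

lemma integrable_err_mean: "integrable M err_mean"
  using Bochner_Integration.integrable_diff[OF integrable_err integrable_noise_sum_age[of k Suc]]
  by (simp add: err_eq_err_mean_add_noise cong: Bochner_Integration.integrable_cong)

lemma integrable_xcheck: "integrable M xcheck"
  using Bochner_Integration.integrable_diff[OF integrable_x[of k] integrable_noise_sum_age[of "k - 1" id]]
  by (simp add: x_k_eq_xcheck_add_noise cong: Bochner_Integration.integrable_cong)

section \<open>Conditional moments of the noise\<close>

definition noise_cov :: "nat \<Rightarrow> real^'n^'n" where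
  "noise_cov c = (\<Sum>t<c. matpow A t ** W ** transpose (matpow A t))"

lemma noise_sum_nth: "noise_sum j c \<omega> $ i = (\<Sum>t<c. \<Sum>l\<in>UNIV. matpow A t $ i $ l * w (j - t) \<omega> $ l)"
  by (simp add: noise_sum_def sum_component matrix_vector_mult_def)

lemma noise_sum_nth_mult:
  "noise_sum j c \<omega> $ i * noise_sum j c \<omega> $ i' = (\<Sum>t<c. \<Sum>s<c. \<Sum>l\<in>UNIV. \<Sum>l'\<in>UNIV.
     (matpow A t $ i $ l * matpow A s $ i' $ l') * (w (j - t) \<omega> $ l * w (j - s) \<omega> $ l'))"
  by (simp add: noise_sum_nth sum_product mult_ac)

lemma noise_cov_nth:
  "noise_cov c $ i $ i' = (\<Sum>t<c. \<Sum>l\<in>UNIV. \<Sum>l'\<in>UNIV. matpow A t $ i $ l * matpow A t $ i' $ l' * W $ l $ l')"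
  by (simp add: noise_cov_def sum_component matrix_mul_transpose_nth)

lemma integrable_noise_sum_mult: "integrable M (\<lambda>\<omega>. noise_sum j c \<omega> $ i * noise_sum j c \<omega> $ i')"
  unfolding noise_sum_nth_mult
  by (intro Bochner_Integration.integrable_sum integrable_mult_right integrable_noise_nth_mult)

lemma integral_indicator_noise_sum:
  assumes S: "S \<in> sigma_sets (space M) (pre_noise_sets b)" and late: "\<And>t. t < c \<Longrightarrow> b \<le> j - t"
  shows "(\<integral>\<omega>. indicator S \<omega> * noise_sum j c \<omega> $ i \<partial>M) = 0"
proof -
  have int: "integrable M (\<lambda>\<omega>. indicator S \<omega> * w (j - t) \<omega> $ l)" for t l
    using pre_noise_sigma_sets_subset_events[OF S] by (intro integrable_indicator_mult noise_nth_moments(1))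
  have "(\<integral>\<omega>. indicator S \<omega> * noise_sum j c \<omega> $ i \<partial>M)
      = (\<integral>\<omega>. (\<Sum>t<c. \<Sum>l\<in>UNIV. matpow A t $ i $ l * (indicator S \<omega> * w (j - t) \<omega> $ l)) \<partial>M)"
    by (simp add: noise_sum_nth sum_distrib_left mult.left_commute)
  also have "\<dots> = (\<Sum>t<c. \<Sum>l\<in>UNIV. matpow A t $ i $ l * (\<integral>\<omega>. indicator S \<omega> * w (j - t) \<omega> $ l \<partial>M))"
    using int by (simp add: Bochner_Integration.integral_sum Bochner_Integration.integrable_sum)
  also have "\<dots> = 0"
    using integral_indicator_mult_noise_nth[OF S late] by simp
  finally show ?thesis .
qed

lemma integral_indicator_noise_sum_mult:
  assumes S: "S \<in> sigma_sets (space M) (pre_noise_sets b)" and late: "\<And>t. t < c \<Longrightarrow> b \<le> j - t"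
    and "c \<le> Suc j"
  shows "(\<integral>\<omega>. indicator S \<omega> * (noise_sum j c \<omega> $ i * noise_sum j c \<omega> $ i') \<partial>M) = prob S * noise_cov c $ i $ i'"
proof -
  have int: "integrable M (\<lambda>\<omega>. indicator S \<omega> * (w (j - t) \<omega> $ l * w (j - s) \<omega> $ l'))" for t s l l'
    using pre_noise_sigma_sets_subset_events[OF S] by (intro integrable_indicator_mult integrable_noise_nth_mult)
  have distinct: "j - t = j - s \<longleftrightarrow> s = t" if "t < c" "s < c" for t s
    using that \<open>c \<le> Suc j\<close> by auto
  have "(\<integral>\<omega>. indicator S \<omega> * (noise_sum j c \<omega> $ i * noise_sum j c \<omega> $ i') \<partial>M)
      = (\<integral>\<omega>. (\<Sum>t<c. \<Sum>s<c. \<Sum>l\<in>UNIV. \<Sum>l'\<in>UNIV. (matpow A t $ i $ l * matpow A s $ i' $ l')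
          * (indicator S \<omega> * (w (j - t) \<omega> $ l * w (j - s) \<omega> $ l'))) \<partial>M)"
    by (simp add: noise_sum_nth_mult sum_distrib_left mult.left_commute)
  also have "\<dots> = (\<Sum>t<c. \<Sum>s<c. \<Sum>l\<in>UNIV. \<Sum>l'\<in>UNIV. (matpow A t $ i $ l * matpow A s $ i' $ l')
      * (\<integral>\<omega>. indicator S \<omega> * (w (j - t) \<omega> $ l * w (j - s) \<omega> $ l') \<partial>M))"
    using int by (simp add: Bochner_Integration.integral_sum Bochner_Integration.integrable_sum)
  also have "\<dots> = (\<Sum>t<c. \<Sum>s<c. if s = t then (\<Sum>l\<in>UNIV. \<Sum>l'\<in>UNIV.
      (matpow A t $ i $ l * matpow A t $ i' $ l') * (prob S * W $ l $ l')) else 0)"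
    using integral_indicator_mult_noise_nth_mult[OF S late late] distinct
    by (intro sum.cong refl) auto
  also have "\<dots> = prob S * noise_cov c $ i $ i'"
    by (simp add: noise_cov_nth sum.delta' sum_distrib_left mult_ac)
  finally show ?thesis .
qed

lemma age_event_in_events: "age_event c \<in> events"
proof -
  have "zeta \<tau> k \<in> M \<rightarrow>\<^sub>M count_space UNIV" by (rule measurable_zeta[OF tau_meas[rule_format]])
  from measurable_sets[OF this, of "{c}"] show ?thesis
    by (simp add: age_event_def vimage_def Int_def conj_commute)
qed

lemma integral_indicator_split_age:
  fixes f :: "'a \<Rightarrow> real"
  assumes f: "integrable M f" and G: "G \<in> events"
  shows "(\<integral>\<omega>. indicator G \<omega> * f \<omega> \<partial>M) = (\<Sum>c\<le>k. \<integral>\<omega>. indicator (G \<inter> age_event c) \<omega> * f \<omega> \<partial>M)"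
proof -
  have "(\<Sum>c\<le>k. \<integral>\<omega>. indicator (G \<inter> age_event c) \<omega> * f \<omega> \<partial>M)
      = (\<integral>\<omega>. (\<Sum>c\<le>k. indicator (G \<inter> age_event c) \<omega> * f \<omega>) \<partial>M)"
    using G age_event_in_events
    by (intro Bochner_Integration.integral_sum[symmetric] integrable_indicator_mult f) auto
  also have "\<dots> = (\<integral>\<omega>. indicator G \<omega> * f \<omega> \<partial>M)"
  proof (rule Bochner_Integration.integral_cong[OF refl])
    fix \<omega> assume "\<omega> \<in> space M"
    then have "(\<Sum>c\<le>k. indicator (G \<inter> age_event c) \<omega> * f \<omega>)
        = (\<Sum>c\<le>k. if c = zeta \<tau> k \<omega> then indicator G \<omega> * f \<omega> else 0)"
      by (intro sum.cong) (auto simp: indicator_def age_event_def)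
    also have "\<dots> = indicator G \<omega> * f \<omega>" using zeta_le[of \<tau> k \<omega>] by (simp add: sum.delta')
    finally show "(\<Sum>c\<le>k. indicator (G \<inter> age_event c) \<omega> * f \<omega>) = indicator G \<omega> * f \<omega>" .
  qed
  finally show ?thesis by simp
qed

lemma integral_info_decision_k_noise_sum:
  assumes G: "G \<in> sets info_decision_k" and late: "\<And>c t. c \<le> k \<Longrightarrow> t < m c \<Longrightarrow> k - c \<le> j - t"
  shows "(\<integral>\<omega>. indicator G \<omega> * noise_sum j (m (zeta \<tau> k \<omega>)) \<omega> $ i \<partial>M) = 0"
proof -
  have "(\<integral>\<omega>. indicator G \<omega> * noise_sum j (m (zeta \<tau> k \<omega>)) \<omega> $ i \<partial>M)
      = (\<Sum>c\<le>k. \<integral>\<omega>. indicator (G \<inter> age_event c) \<omega> * noise_sum j (m c) \<omega> $ i \<partial>M)"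
    unfolding integral_indicator_split_age[OF integrable_vec_nth[OF integrable_noise_sum_age]
        sets_info_decision_k_subset_events[OF G]]
    by (intro sum.cong refl integral_indicator_mult_cong) (simp add: age_event_def)
  also have "\<dots> = 0"
    by (intro sum.neutral ballI integral_indicator_noise_sum[OF info_decision_k_Int_age_event[OF G]] late) auto
  finally show ?thesis .
qed

lemma integral_info_decision_k_noise_sum_mult:
  assumes G: "G \<in> sets info_decision_k"
  shows "(\<integral>\<omega>. indicator G \<omega> * (noise_sum k (Suc (zeta \<tau> k \<omega>)) \<omega> $ i * noise_sum k (Suc (zeta \<tau> k \<omega>)) \<omega> $ i') \<partial>M)
       = (\<integral>\<omega>. indicator G \<omega> * noise_cov (Suc (zeta \<tau> k \<omega>)) $ i $ i' \<partial>M)"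
proof -
  have int: "integrable M (\<lambda>\<omega>. noise_sum k (Suc (zeta \<tau> k \<omega>)) \<omega> $ i * noise_sum k (Suc (zeta \<tau> k \<omega>)) \<omega> $ i')"
    by (rule integrable_compose_countable_on[OF measurable_zeta[OF tau_meas[rule_format]], where I="{..k}"
          and f="\<lambda>c \<omega>. noise_sum k (Suc c) \<omega> $ i * noise_sum k (Suc c) \<omega> $ i'"])
       (simp_all add: zeta_le integrable_noise_sum_mult)
  have int_cov: "integrable M (\<lambda>\<omega>. noise_cov (Suc (zeta \<tau> k \<omega>)) $ i $ i')"
    by (rule integrable_compose_countable_on[OF measurable_zeta[OF tau_meas[rule_format]], where I="{..k}"
          and f="\<lambda>c \<omega>. noise_cov (Suc c) $ i $ i'"]) (simp_all add: zeta_le)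
  have "(\<integral>\<omega>. indicator G \<omega> * (noise_sum k (Suc (zeta \<tau> k \<omega>)) \<omega> $ i * noise_sum k (Suc (zeta \<tau> k \<omega>)) \<omega> $ i') \<partial>M)
      = (\<Sum>c\<le>k. \<integral>\<omega>. indicator (G \<inter> age_event c) \<omega> * (noise_sum k (Suc c) \<omega> $ i * noise_sum k (Suc c) \<omega> $ i') \<partial>M)"
    unfolding integral_indicator_split_age[OF int sets_info_decision_k_subset_events[OF G]]
    by (intro sum.cong refl integral_indicator_mult_cong) (simp add: age_event_def)
  also have "\<dots> = (\<Sum>c\<le>k. prob (G \<inter> age_event c) * noise_cov (Suc c) $ i $ i')"
    by (intro sum.cong refl integral_indicator_noise_sum_mult[OF info_decision_k_Int_age_event[OF G]]) auto
  also have "\<dots> = (\<Sum>c\<le>k. \<integral>\<omega>. indicator (G \<inter> age_event c) \<omega> * noise_cov (Suc c) $ i $ i' \<partial>M)"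
    using sets_info_decision_k_subset_events[OF G] age_event_in_events by (simp add: mult.commute)
  also have "\<dots> = (\<Sum>c\<le>k. \<integral>\<omega>. indicator (G \<inter> age_event c) \<omega> * noise_cov (Suc (zeta \<tau> k \<omega>)) $ i $ i' \<partial>M)"
    by (intro sum.cong refl integral_indicator_mult_cong) (simp add: age_event_def)
  also have "\<dots> = (\<integral>\<omega>. indicator G \<omega> * noise_cov (Suc (zeta \<tau> k \<omega>)) $ i $ i' \<partial>M)"
    by (rule integral_indicator_split_age[OF int_cov sets_info_decision_k_subset_events[OF G], symmetric])
  finally show ?thesis .
qed

lemma cond_exp_x_k: "AE \<omega> in M. cond_exp_vec M info_k (x k) \<omega> = xcheck \<omega>"
proof -
  interpret finite_measure_subalgebra M info_k by unfold_locales (rule subalgebra_info_k)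
  show ?thesis
  proof (rule cond_exp_vec_split[OF x_k_eq_xcheck_add_noise _ integrable_xcheck
        integrable_noise_sum_age[of "k - 1" "\<lambda>c. c"] measurable_xcheck])
    fix G i assume "G \<in> sets info_k"
    then have "G \<in> sets info_decision_k"
      using subalgebra_info_decision_info_k unfolding subalgebra_def by auto
    then show "(\<integral>\<omega>. indicator G \<omega> * noise_sum (k - 1) (zeta \<tau> k \<omega>) \<omega> $ i \<partial>M) = 0"
      by (rule integral_info_decision_k_noise_sum) auto
  qed
qed

lemma cond_exp_err: "AE \<omega> in M. cond_exp_vec M info_decision_k err \<omega> = err_mean \<omega>"
proof -
  interpret finite_measure_subalgebra M info_decision_k by unfold_locales (rule subalgebra_info_decision_k)
  show ?thesis
    by (rule cond_exp_vec_split[OF err_eq_err_mean_add_noise integral_info_decision_k_noise_sum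
          integrable_err_mean integrable_noise_sum_age measurable_err_mean]) auto
qed

lemma cond_cov_err: "AE \<omega> in M. cond_cov M info_decision_k err \<omega> = noise_cov (Suc (zeta \<tau> k \<omega>))"
proof -
  interpret finite_measure_subalgebra M info_decision_k by unfold_locales (rule subalgebra_info_decision_k)
  have zeta: "zeta \<tau> k \<in> info_decision_k \<rightarrow>\<^sub>M count_space UNIV"
    by (rule measurable_info_k_info_decision_k[OF measurable_info_k_data(1)]) simp
  show ?thesis
  proof (rule cond_cov_split[OF cond_exp_err err_eq_err_mean_add_noise integral_info_decision_k_noise_sum_mult])
    fix i j
    show "integrable M (\<lambda>\<omega>. noise_cov (Suc (zeta \<tau> k \<omega>)) $ i $ j)"
      by (rule integrable_compose_countable_on[OF measurable_zeta[OF tau_meas[rule_format]], where I="{..k}"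
            and f="\<lambda>c \<omega>. noise_cov (Suc c) $ i $ j"]) (simp_all add: zeta_le)
    show "(\<lambda>\<omega>. noise_cov (Suc (zeta \<tau> k \<omega>)) $ i $ j) \<in> borel_measurable info_decision_k"
      using measurable_compose[OF zeta, where g="\<lambda>c. noise_cov (Suc c) $ i $ j" and L=borel] by simp
  qed (auto intro: borel_measurable_integrable integrable_err integrable_noise_sum_age
      integrable_compose_countable_on[OF measurable_zeta[OF tau_meas[rule_format]], where I="{..k}"]
      simp: zeta_le integrable_noise_sum_mult)
qed

end

theorem lemma4:
  fixes M :: "'a measure"
    and A :: "real^'n^'n" and B :: "real^'m^'n"
    and W M0 Q :: "real^'n^'n" and R :: "real^'m^'m" and m0 :: "real^'n"
    and N :: nat
    and x w xhat :: "nat \<Rightarrow> 'a \<Rightarrow> real^'n" and u :: "nat \<Rightarrow> 'a \<Rightarrow> real^'m"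
    and \<tau> :: "nat \<Rightarrow> 'a \<Rightarrow> nat" and \<delta> :: "nat \<Rightarrow> 'a \<Rightarrow> bool" and \<nu> :: "nat \<Rightarrow> 'a \<Rightarrow> real"
    and k :: nat
  assumes P: "prob_space M"
    and W_pd: "pd_mat W" and Q_psd: "psd_mat Q" and R_pd: "pd_mat R"
    and x0_gauss: "gaussian_vec M (x 0) m0 M0"
    and w_gauss: "\<forall>j. gaussian_vec M (w j) 0 W"
    and tau_meas: "\<forall>j. \<tau> j \<in> measurable M (count_space UNIV)"
    and tau0: "\<forall>\<omega>\<in>space M. \<tau> 0 \<omega> = 0"
    and nu_meas: "\<forall>j. \<nu> j \<in> borel_measurable M"
    and indep: "prob_space.indep_sets M (prim_sets M (x 0) w \<tau> \<nu>) UNIV"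
    and dyn: "\<forall>j. \<forall>\<omega>\<in>space M. x (Suc j) \<omega> = A *v x j \<omega> + B *v u j \<omega> + w j \<omega>"
    and ctrl: "\<forall>j\<le>N. \<forall>\<omega>\<in>space M. u j \<omega> = - (gain_L A B Q R N j *v xhat j \<omega>)"
    and est0: "\<forall>\<omega>\<in>space M. xhat 0 \<omega> = m0"
    and est: "\<forall>j. \<forall>\<omega>\<in>space M. xhat (Suc j) \<omega> =
                (if \<delta> j \<omega>
                 then matpow A (zeta \<tau> j \<omega> + 1) *v x (j - zeta \<tau> j \<omega>) \<omega>
                      + (\<Sum>t\<le>zeta \<tau> j \<omega>. matpow A t *v (B *v u (j - t) \<omega>))
                 else A *v xhat j \<omega> + B *v u j \<omega>)"
    and trig: "\<forall>j\<le>N. \<delta> j \<in> measurable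
                  (sigma (space M) (info_sets M x u \<delta> \<tau> j \<union> rv_sets M borel (\<nu> j)))
                  (count_space UNIV)"
    and kN: "k \<le> N"
  shows "let F = sigma (space M) (info_sets M x u \<delta> \<tau> k \<union> rv_sets M (count_space UNIV) (\<delta> k));
             e = (\<lambda>\<omega>. x (Suc k) \<omega> - xhat (Suc k) \<omega>);
             xcheck = cond_exp_vec M (info_alg M x u \<delta> \<tau> k) (x k)
         in (AE \<omega> in M. cond_exp_vec M F e \<omega>
                         = (1 - of_bool (\<delta> k \<omega>)) *\<^sub>R (A *v (xcheck \<omega> - xhat k \<omega>)))
          \<and> (AE \<omega> in M. cond_cov M F e \<omega>
                         = (\<Sum>t\<le>zeta \<tau> k \<omega>. matpow A t ** W ** transpose (matpow A t)))"
proof -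
  interpret event_triggered_lq M A B W M0 Q R m0 N x w xhat u \<tau> \<delta> \<nu> k
    unfolding event_triggered_lq_def event_triggered_lq_axioms_def
    using P W_pd x0_gauss w_gauss tau_meas nu_meas indep dyn ctrl est0 est trig kN by blast
  have "AE \<omega> in M. cond_exp_vec M info_decision_k err \<omega>
      = (1 - of_bool (\<delta> k \<omega>)) *\<^sub>R (A *v (cond_exp_vec M info_k (x k) \<omega> - xhat k \<omega>))"
    using cond_exp_err cond_exp_x_k by eventually_elim (simp add: err_mean_def)
  then show ?thesis
    using cond_cov_err unfolding Let_def info_decision_k_def err_def[abs_def]
    by (simp add: noise_cov_def lessThan_Suc_atMost)
qed

end
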